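(* Suppose the chain is $\varrho$-metastable w.r.t. $\mathcal M=\{M_1,\dots,M_K\}$, $K\ge2$, and let $(\mathcal S_i)$ be a metastable partition. Let $M_i\in\mathcal M$, let $\mathcal B\subset\mathcal M\setminus\{M_i\}$ be nonempty with index set $I_{\mathcal B}$, and $B=\bigcup_{M\in\mathcal B}M$. Then for every $\delta\in(0,1/2)$, $$1-2\delta\le\frac{\mathrm{cap}(M_i,B)}{\mathrm{cap}\bigl(\mathcal U_{M_i}(\delta,B),\mathcal U_B(\delta,M_i)\bigr)}\le1,$$ and the set $X=\mathcal S_i\setminus\mathcal U_{M_i}(\delta,B)$ satisfies $\mu[X]\le\varrho\,\delta^{-1}\mu[M_i]$.
   Context: Setting: $\mathcal S$ countable; $(X(t))_{t\in\mathbb N_0}$ irreducible positive recurrent discrete-time Markov chain reversible w.r.t. its invariant probability measure $\mu$; $\mathbb P_\nu$ law started from $\nu$; $\tau_A=\inf\{t>0:X(t)\in A\}$; $\mu_A=\mu[\cdot\mid A]$. Equilibrium potential $h_{A,B}$: $1$ on $A$, $0$ on $B$, $\mathbb P_x[\tau_A<\tau_B]$ elsewhere; $\mathrm{cap}(A,B)=\sum_{x\in A}\mu(x)\mathbb P_x[\tau_B<\tau_A]$. Metastability: $\mathcal M=\{M_1,\dots,M_K\}$ nonempty pairwise disjoint, $\mathbf M=\bigcup_jM_j$; $p_{\mathrm{esc}}:=\max_{M\in\mathcal M}\mathbb P_{\mu_M}[\tau_{\mathbf M\setminus M}<\tau_M]$; $\varrho$-metastable means $|\mathcal M|\,p_{\mathrm{esc}}\le\varrho\min_{\emptyset\ne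 A\subset\mathcal S\setminus\mathbf M}\mathbb P_{\mu_A}[\tau_{\mathbf M}<\tau_A]$. Local valley $\mathcal V_i=\{x:\mathbb P_x[\tau_{M_i}<\tau_{\mathbf M\setminus M_i}]\ge\max_{j\ne i}\mathbb P_x[\tau_{M_j}<\tau_{\mathbf M\setminus M_j}]\}$; metastable partition: $\mathcal S=\biguplus_i\mathcal S_i$, $\mathcal S_i\subset\mathcal V_i$, $M_i\subset\mathcal S_i$. Harmonic neighbourhood: for disjoint nonempty subcollections $\mathcal A,\mathcal B\subset\mathcal M$ with index sets $I_{\mathcal A},I_{\mathcal B}$, $A=\bigcup_{M\in\mathcal A}M$, $B=\bigcup_{M\in\mathcal B}M$ and $\delta\in(0,1)$: $\mathcal U_A(\delta,B)=\{x\in\bigcup_{i\in I_{\mathcal A}}\mathcal S_i: h_{A,B}(x)\ge1-\delta\}$. *)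

theory Defs
  imports "HOL-Analysis.Analysis"
begin

text \<open>Discrete-time Markov chain on a countable state space 's, given by its
transition matrix P. Hitting probabilities are defined by summing over paths.
hit_n P A B n x is the probability, starting from x, that tau_A = n+1 and
tau_B > n+1, where tau_C = inf{t > 0. X(t) in C}.\<close>

fun hit_n :: "('s \<Rightarrow> 's \<Rightarrow> real) \<Rightarrow> 's set \<Rightarrow> 's set \<Rightarrow> nat \<Rightarrow> 's \<Rightarrow> real" where
  "hit_n P A B 0 x = (\<Sum>\<^sub>\<infinity>y\<in>A - B. P x y)"
| "hit_n P A B (Suc n) x = (\<Sum>\<^sub>\<infinity>y\<in>- (A \<union> B). P x y * hit_n P A B n y)"

text \<open>hitprob P A B x = P_x[tau_A < tau_B].\<close>
definition hitprob :: "('s \<Rightarrow> 's \<Rightarrow> real) \<Rightarrow> 's set \<Rightarrow> 's set \<Rightarrow> 's \<Rightarrow> real" where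
  "hitprob P A B x = (\<Sum>n. hit_n P A B n x)"

definition stochastic :: "('s \<Rightarrow> 's \<Rightarrow> real) \<Rightarrow> bool" where
  "stochastic P \<longleftrightarrow> (\<forall>x y. 0 \<le> P x y) \<and> (\<forall>x. (P x has_sum 1) UNIV)"

definition irreducible_chain :: "('s \<Rightarrow> 's \<Rightarrow> real) \<Rightarrow> bool" where
  "irreducible_chain P \<longleftrightarrow> (\<forall>x y. (x, y) \<in> {(a, b). 0 < P a b}\<^sup>*)"

text \<open>Positive recurrence: every state is recurrent (P_x[tau_x < infinity] = 1)
and has finite mean return time E_x[tau_x].\<close>
definition positive_recurrent :: "('s \<Rightarrow> 's \<Rightarrow> real) \<Rightarrow> bool" where
  "positive_recurrent P \<longleftrightarrow>
     (\<forall>x. hitprob P {x} {} x = 1 \<and> summable (\<lambda>n. real (Suc n) * hit_n P {x} {} n x))"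

definition invariant_prob :: "('s \<Rightarrow> 's \<Rightarrow> real) \<Rightarrow> ('s \<Rightarrow> real) \<Rightarrow> bool" where
  "invariant_prob P \<mu> \<longleftrightarrow> (\<forall>x. 0 \<le> \<mu> x) \<and> (\<mu> has_sum 1) UNIV \<and>
     (\<forall>y. ((\<lambda>x. \<mu> x * P x y) has_sum \<mu> y) UNIV)"

definition reversible :: "('s \<Rightarrow> 's \<Rightarrow> real) \<Rightarrow> ('s \<Rightarrow> real) \<Rightarrow> bool" where
  "reversible P \<mu> \<longleftrightarrow> (\<forall>x y. \<mu> x * P x y = \<mu> y * P y x)"

definition rev_pos_rec_chain :: "('s::countable \<Rightarrow> 's \<Rightarrow> real) \<Rightarrow> ('s \<Rightarrow> real) \<Rightarrow> bool" where
  "rev_pos_rec_chain P \<mu> \<longleftrightarrow> stochastic P \<and> irreducible_chain P \<and> positive_recurrent P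
     \<and> invariant_prob P \<mu> \<and> reversible P \<mu>"

definition meas :: "('s \<Rightarrow> real) \<Rightarrow> 's set \<Rightarrow> real" where
  "meas \<mu> A = (\<Sum>\<^sub>\<infinity>x\<in>A. \<mu> x)"

definition hitprob_cond :: "('s \<Rightarrow> 's \<Rightarrow> real) \<Rightarrow> ('s \<Rightarrow> real) \<Rightarrow> 's set \<Rightarrow> 's set \<Rightarrow> 's set \<Rightarrow> real" where
  "hitprob_cond P \<mu> A C D = (\<Sum>\<^sub>\<infinity>x\<in>A. \<mu> x * hitprob P C D x) / meas \<mu> A"

definition eq_pot :: "('s \<Rightarrow> 's \<Rightarrow> real) \<Rightarrow> 's set \<Rightarrow> 's set \<Rightarrow> 's \<Rightarrow> real" where
  "eq_pot P A B x = (if x \<in> A then 1 else if x \<in> B then 0 else hitprob P A B x)"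

definition cap :: "('s \<Rightarrow> 's \<Rightarrow> real) \<Rightarrow> ('s \<Rightarrow> real) \<Rightarrow> 's set \<Rightarrow> 's set \<Rightarrow> real" where
  "cap P \<mu> A B = (\<Sum>\<^sub>\<infinity>x\<in>A. \<mu> x * hitprob P B A x)"

definition Mbig :: "(nat \<Rightarrow> 's set) \<Rightarrow> nat \<Rightarrow> 's set" where
  "Mbig M K = (\<Union>i<K. M i)"

definition p_esc :: "('s \<Rightarrow> 's \<Rightarrow> real) \<Rightarrow> ('s \<Rightarrow> real) \<Rightarrow> (nat \<Rightarrow> 's set) \<Rightarrow> nat \<Rightarrow> real" where
  "p_esc P \<mu> M K = Max ((\<lambda>i. hitprob_cond P \<mu> (M i) (Mbig M K - M i) (M i)) ` {..<K})"

definition metastable :: "('s \<Rightarrow> 's \<Rightarrow> real) \<Rightarrow> ('s \<Rightarrow> real) \<Rightarrow> real \<Rightarrow> (nat \<Rightarrow> 's set) \<Rightarrow> nat \<Rightarrow> bool" where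
  "metastable P \<mu> \<rho> M K \<longleftrightarrow>
     (\<forall>i<K. M i \<noteq> {}) \<and> (\<forall>i<K. \<forall>j<K. i \<noteq> j \<longrightarrow> M i \<inter> M j = {}) \<and>
     (\<forall>A. A \<noteq> {} \<and> A \<subseteq> - Mbig M K \<longrightarrow>
        real K * p_esc P \<mu> M K \<le> \<rho> * hitprob_cond P \<mu> A (Mbig M K) A)"

definition local_valley :: "('s \<Rightarrow> 's \<Rightarrow> real) \<Rightarrow> (nat \<Rightarrow> 's set) \<Rightarrow> nat \<Rightarrow> nat \<Rightarrow> 's set" where
  "local_valley P M K i = {x. \<forall>j<K. j \<noteq> i \<longrightarrow>
      hitprob P (M j) (Mbig M K - M j) x \<le> hitprob P (M i) (Mbig M K - M i) x}"

definition metastable_partition ::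
  "('s \<Rightarrow> 's \<Rightarrow> real) \<Rightarrow> (nat \<Rightarrow> 's set) \<Rightarrow> nat \<Rightarrow> (nat \<Rightarrow> 's set) \<Rightarrow> bool" where
  "metastable_partition P M K S \<longleftrightarrow>
     (\<Union>i<K. S i) = UNIV \<and> (\<forall>i<K. \<forall>j<K. i \<noteq> j \<longrightarrow> S i \<inter> S j = {}) \<and>
     (\<forall>i<K. S i \<subseteq> local_valley P M K i \<and> M i \<subseteq> S i)"

definition harm_nbhd ::
  "('s \<Rightarrow> 's \<Rightarrow> real) \<Rightarrow> (nat \<Rightarrow> 's set) \<Rightarrow> (nat \<Rightarrow> 's set) \<Rightarrow> nat set \<Rightarrow> real \<Rightarrow> nat set \<Rightarrow> 's set" where
  "harm_nbhd P M S IA \<delta> IB =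
     {x \<in> (\<Union>i\<in>IA. S i). 1 - \<delta> \<le> eq_pot P (\<Union>i\<in>IA. M i) (\<Union>j\<in>IB. M j) x}"

end

theory Submission
  imports Defs
begin

text \<open>By reversibility, the capacity of disjoint sets \<open>A, B\<close> is the Dirichlet energy of the
  equilibrium potential \<open>h(A, B)\<close>, which minimises the energy among all functions equal to \<open>1\<close>
  on \<open>A\<close> and \<open>0\<close> on \<open>B\<close>. Hence the capacity grows when both sets are enlarged, which is the
  upper bound. For the lower bound, \<open>(h - \<delta>) / (1 - 2\<delta>)\<close> with \<open>h = h(M\<^sub>i, B)\<close>, clamped to
  \<open>[0, 1]\<close>, is admissible for the two harmonic neighbourhoods and has energy at most
  \<open>cap(M\<^sub>i, B) / (1 - 2\<delta>)\<close>.

  A point of \<open>X = S\<^sub>i - U\<close> reaches the other metastable sets before \<open>M\<^sub>i\<close> with probability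
  more than \<open>\<delta>\<close>, and, lying in the valley of \<open>M\<^sub>i\<close>, reaches \<open>M\<^sub>i\<close> first with probability at
  least \<open>1/K\<close>. Writing \<open>cap(X, M)\<close> by reversibility as a sum over \<open>M\<close> and comparing hitting
  probabilities with the maximum principle gives \<open>cap(X, M) \<le> (1/\<delta> + K) cap(M\<^sub>i, M - M\<^sub>i)\<close>,
  and \<open>\<rho>\<close>-metastability turns this into \<open>\<mu>[X] \<le> \<rho>/\<delta> \<mu>[M\<^sub>i]\<close>.\<close>

section \<open>Unordered sums and bounded functions\<close>

lemma infsum_diff:
  fixes f g :: "'a \<Rightarrow> real"
  assumes "f summable_on A" "g summable_on A"
  shows "(\<Sum>\<^sub>\<infinity>x\<in>A. f x - g x) = infsum f A - infsum g A"
proof -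
  have "(\<lambda>x. - g x) summable_on A" using assms(2) by (simp add: summable_on_uminus)
  from infsum_add[OF assms(1) this] show ?thesis by (simp add: infsum_uminus)
qed

lemma summable_on_diff:
  fixes f g :: "'a \<Rightarrow> real"
  assumes "f summable_on A" "g summable_on A"
  shows "(\<lambda>x. f x - g x) summable_on A"
proof -
  have "(\<lambda>x. - g x) summable_on A" using assms(2) by (simp add: summable_on_uminus)
  from summable_on_add[OF assms(1) this] show ?thesis by simp
qed

lemma summable_on_mult_bounded:
  fixes w f :: "'a \<Rightarrow> real"
  assumes "w summable_on A" "\<And>x. x \<in> A \<Longrightarrow> 0 \<le> w x" "\<And>x. x \<in> A \<Longrightarrow> \<bar>f x\<bar> \<le> c"
  shows "(\<lambda>x. w x * f x) summable_on A"
proof -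
  have "(\<lambda>x. \<bar>c\<bar> * w x) summable_on A" using assms(1) by (rule summable_on_cmult_right)
  then have "(\<lambda>x. norm (\<bar>c\<bar> * w x)) summable_on A"
    by (rule summable_on_iff_abs_summable_on_real[THEN iffD1])
  then have "(\<lambda>x. norm (w x * f x)) summable_on A"
  proof (rule Infinite_Sum.abs_summable_on_comparison_test)
    fix x assume x: "x \<in> A"
    have "\<bar>w x * f x\<bar> = w x * \<bar>f x\<bar>" using assms(2)[OF x] by (simp add: abs_mult)
    also have "\<dots> \<le> w x * \<bar>c\<bar>" using assms(2)[OF x] assms(3)[OF x]
      by (intro mult_left_mono) auto
    finally show "norm (w x * f x) \<le> norm (\<bar>c\<bar> * w x)" using assms(2)[OF x] by (simp add: abs_mult mult.commute)
  qed
  then show ?thesis by (rule summable_on_iff_abs_summable_on_real[THEN iffD2])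
qed

definition bounded_fun :: "('a \<Rightarrow> real) \<Rightarrow> bool" where
  "bounded_fun f \<longleftrightarrow> (\<exists>c. \<forall>x. \<bar>f x\<bar> \<le> c)"

lemma bounded_funI: "(\<And>x. \<bar>f x\<bar> \<le> c) \<Longrightarrow> bounded_fun f" unfolding bounded_fun_def by blast
lemma bounded_funE: assumes "bounded_fun f" obtains c where "\<And>x. \<bar>f x\<bar> \<le> c" using assms unfolding bounded_fun_def by blast

lemma bounded_fun_add: assumes "bounded_fun f" "bounded_fun g" shows "bounded_fun (\<lambda>x. f x + g x)"
proof -
  obtain c d where c: "\<And>x. \<bar>f x\<bar> \<le> c" and d: "\<And>x. \<bar>g x\<bar> \<le> d" using assms by (metis bounded_funE)
  have "\<bar>f x + g x\<bar> \<le> c + d" for x using c[of x] d[of x] by linarith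
  then show ?thesis by (rule bounded_funI)
qed
lemma bounded_fun_diff: assumes "bounded_fun f" "bounded_fun g" shows "bounded_fun (\<lambda>x. f x - g x)"
proof -
  obtain c d where c: "\<And>x. \<bar>f x\<bar> \<le> c" and d: "\<And>x. \<bar>g x\<bar> \<le> d" using assms by (metis bounded_funE)
  have "\<bar>f x - g x\<bar> \<le> c + d" for x using c[of x] d[of x] by linarith
  then show ?thesis by (rule bounded_funI)
qed
lemma bounded_fun_mult: assumes "bounded_fun f" "bounded_fun g" shows "bounded_fun (\<lambda>x. f x * g x)"
proof -
  obtain c d where c: "\<And>x. \<bar>f x\<bar> \<le> c" and d: "\<And>x. \<bar>g x\<bar> \<le> d" using assms by (metis bounded_funE)
  have "\<bar>f x * g x\<bar> \<le> c * d" for x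
  proof -
    have "\<bar>f x * g x\<bar> = \<bar>f x\<bar> * \<bar>g x\<bar>" by (rule abs_mult)
    also have "\<dots> \<le> c * d" by (rule mult_mono[OF c d]) (use c[of x] in auto)
    finally show ?thesis .
  qed
  then show ?thesis by (rule bounded_funI)
qed
lemma bounded_fun_const: "bounded_fun (\<lambda>x. c)" by (rule bounded_funI[of _ "\<bar>c\<bar>"]) simp
lemma bounded_fun_cmult: "bounded_fun f \<Longrightarrow> bounded_fun (\<lambda>x. c * f x)" using bounded_fun_mult[OF bounded_fun_const] by blast
lemma bounded_fun_unit_interval: "(\<And>x. 0 \<le> f x \<and> f x \<le> 1) \<Longrightarrow> bounded_fun f" by (rule bounded_funI[of _ 1]) (metis abs_of_nonneg)
lemma bounded_fun_max: "bounded_fun f \<Longrightarrow> bounded_fun (\<lambda>x. max (f x) c)"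
proof (elim bounded_funE)
  fix d assume d: "\<And>x. \<bar>f x\<bar> \<le> d"
  show "bounded_fun (\<lambda>x. max (f x) c)"
  proof (rule bounded_funI[of _ "d + \<bar>c\<bar>"])
    fix x have "0 \<le> d" using d[of x] by linarith
    then show "\<bar>max (f x) c\<bar> \<le> d + \<bar>c\<bar>" using d[of x] by (auto simp: abs_le_iff max_def)
  qed
qed
lemma bounded_fun_uminus: "bounded_fun f \<Longrightarrow> bounded_fun (\<lambda>x. - f x)" by (elim bounded_funE, rule bounded_funI) simp

definition trans_op :: "('s \<Rightarrow> 's \<Rightarrow> real) \<Rightarrow> ('s \<Rightarrow> real) \<Rightarrow> 's \<Rightarrow> real" where
  "trans_op P f x = (\<Sum>\<^sub>\<infinity>y. P x y * f y)"

definition dirichlet_form ::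
    "('s \<Rightarrow> 's \<Rightarrow> real) \<Rightarrow> ('s \<Rightarrow> real) \<Rightarrow> ('s \<Rightarrow> real) \<Rightarrow> ('s \<Rightarrow> real) \<Rightarrow> real" where
  "dirichlet_form P \<mu> f g = (\<Sum>\<^sub>\<infinity>x. \<mu> x * (f x * (g x - trans_op P g x)))"

lemma infsum_sum_finite:
  fixes F :: "'j \<Rightarrow> 'a \<Rightarrow> real"
  assumes "finite J" "\<And>j. j \<in> J \<Longrightarrow> F j summable_on A"
  shows "(\<Sum>\<^sub>\<infinity>x\<in>A. \<Sum>j\<in>J. F j x) = (\<Sum>j\<in>J. \<Sum>\<^sub>\<infinity>x\<in>A. F j x)
     \<and> (\<lambda>x. \<Sum>j\<in>J. F j x) summable_on A"
  using assms
proof (induction J rule: finite_induct)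
  case empty then show ?case by simp
next
  case (insert a J)
  have IH: "(\<Sum>\<^sub>\<infinity>x\<in>A. \<Sum>j\<in>J. F j x) = (\<Sum>j\<in>J. \<Sum>\<^sub>\<infinity>x\<in>A. F j x)"
     "(\<lambda>x. \<Sum>j\<in>J. F j x) summable_on A" using insert by auto
  have fa: "F a summable_on A" using insert by auto
  have "(\<Sum>\<^sub>\<infinity>x\<in>A. \<Sum>j\<in>insert a J. F j x) = (\<Sum>\<^sub>\<infinity>x\<in>A. F a x + (\<Sum>j\<in>J. F j x))"
    using insert.hyps by simp
  also have "\<dots> = (\<Sum>\<^sub>\<infinity>x\<in>A. F a x) + (\<Sum>\<^sub>\<infinity>x\<in>A. \<Sum>j\<in>J. F j x)"
    by (rule infsum_add[OF fa IH(2)])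
  finally have 1: "(\<Sum>\<^sub>\<infinity>x\<in>A. \<Sum>j\<in>insert a J. F j x) = (\<Sum>j\<in>insert a J. \<Sum>\<^sub>\<infinity>x\<in>A. F j x)"
    using insert.hyps IH(1) by simp
  have "(\<lambda>x. F a x + (\<Sum>j\<in>J. F j x)) summable_on A" by (rule summable_on_add[OF fa IH(2)])
  then have 2: "(\<lambda>x. \<Sum>j\<in>insert a J. F j x) summable_on A" using insert.hyps by simp
  from 1 2 show ?case ..
qed

lemma abs_diff_mult_diff_le:
  fixes a b a' b' c d :: real
  assumes "\<bar>a\<bar> \<le> c" "\<bar>b\<bar> \<le> c" "\<bar>a'\<bar> \<le> d" "\<bar>b'\<bar> \<le> d"
  shows "\<bar>(a - b) * (a' - b')\<bar> \<le> (2 * c) * (2 * d)"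
proof -
  have 1: "\<bar>a - b\<bar> \<le> 2 * c" using assms(1,2) by linarith
  have 2: "\<bar>a' - b'\<bar> \<le> 2 * d" using assms(3,4) by linarith
  show ?thesis unfolding abs_mult by (rule mult_mono[OF 1 2]) (use assms(1) in auto)
qed

lemma infsum_diff_diff:
  fixes a b c d :: "'a \<Rightarrow> real"
  assumes "a summable_on A" "b summable_on A" "c summable_on A" "d summable_on A"
  shows "(\<Sum>\<^sub>\<infinity>x\<in>A. a x - b x - (c x - d x)) = infsum a A - infsum b A - (infsum c A - infsum d A)"
proof -
  have 1: "(\<lambda>x. a x - b x) summable_on A" "(\<lambda>x. c x - d x) summable_on A"
    using assms summable_on_diff by blast+
  show ?thesis using infsum_diff[OF 1] infsum_diff[OF assms(1,2)] infsum_diff[OF assms(3,4)] by simp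
qed

definition clamp01 :: "real \<Rightarrow> real" where "clamp01 t = max 0 (min 1 t)"

lemma clamp01_diff_bounds: "t \<le> s \<Longrightarrow> 0 \<le> clamp01 s - clamp01 t \<and> clamp01 s - clamp01 t \<le> s - t"
  unfolding clamp01_def by (auto simp: max_def min_def)

lemma clamp01_diff_sq_le:
  fixes d a b :: real
  assumes d: "0 < d" "d < 1/2"
  defines "L \<equiv> 1 / (1 - 2 * d)"
  shows "(clamp01 ((a - d) * L) - clamp01 ((b - d) * L)) * (clamp01 ((a - d) * L) - clamp01 ((b - d) * L))
     \<le> L * ((clamp01 ((a - d) * L) - clamp01 ((b - d) * L)) * (a - b))"
proof -
  have L: "0 < L" unfolding L_def using d by simp
  have key: "(clamp01 ((s - d) * L) - clamp01 ((t - d) * L)) * (clamp01 ((s - d) * L) - clamp01 ((t - d) * L))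
     \<le> L * ((clamp01 ((s - d) * L) - clamp01 ((t - d) * L)) * (s - t))" if st: "t \<le> s" for s t
  proof -
    have "(t - d) * L \<le> (s - d) * L" using st L by (simp add: mult_right_mono)
    from clamp01_diff_bounds[OF this] have 1: "0 \<le> clamp01 ((s - d) * L) - clamp01 ((t - d) * L)"
      and 2: "clamp01 ((s - d) * L) - clamp01 ((t - d) * L) \<le> L * (s - t)" by (auto simp: algebra_simps)
    show ?thesis using mult_left_mono[OF 2 1] by (simp add: algebra_simps)
  qed
  show ?thesis
  proof (cases "b \<le> a")
    case True then show ?thesis by (rule key)
  next
    case False
    then have "a \<le> b" by simp
    from key[OF this] show ?thesis by (simp add: algebra_simps)
  qed
qed

section \<open>Transition operator and maximum principle of a reversible chain\<close>

locale reversible_chain =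
  fixes P :: "'s \<Rightarrow> 's \<Rightarrow> real" and \<mu> :: "'s \<Rightarrow> real"
  assumes stoch: "stochastic P" and irr: "irreducible_chain P"
    and inv: "invariant_prob P \<mu>" and rev: "reversible P \<mu>"
begin

lemma P_nonneg: "0 \<le> P x y" using stoch unfolding stochastic_def by blast
lemma P_has_sum: "(P x has_sum 1) UNIV" using stoch unfolding stochastic_def by blast
lemma summable_on_P: "P x summable_on S"
  using P_has_sum summable_on_subset_banach has_sum_imp_summable by blast
lemma infsum_P: "(\<Sum>\<^sub>\<infinity>y. P x y) = 1" using P_has_sum infsumI by blast
lemma infsum_P_le_1: "(\<Sum>\<^sub>\<infinity>y\<in>S. P x y) \<le> 1"
proof -
  have "(\<Sum>\<^sub>\<infinity>y\<in>S. P x y) \<le> (\<Sum>\<^sub>\<infinity>y. P x y)"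
    by (rule infsum_mono_neutral) (auto simp: summable_on_P P_nonneg)
  then show ?thesis using infsum_P by simp
qed
lemma infsum_P_nonneg: "0 \<le> (\<Sum>\<^sub>\<infinity>y\<in>S. P x y)" by (rule infsum_nonneg) (simp add: P_nonneg)

lemma mu_nonneg: "0 \<le> \<mu> x" using inv unfolding invariant_prob_def by blast
lemma mu_has_sum: "(\<mu> has_sum 1) UNIV" using inv unfolding invariant_prob_def by blast
lemma summable_on_mu: "\<mu> summable_on S"
  using mu_has_sum summable_on_subset_banach has_sum_imp_summable by blast
lemma mu_invariant: "((\<lambda>x. \<mu> x * P x y) has_sum \<mu> y) UNIV" using inv unfolding invariant_prob_def by blast
lemma mu_reversible: "\<mu> x * P x y = \<mu> y * P y x" using rev unfolding reversible_def by blast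

lemma summable_on_P_mult_abs_le: "\<forall>y. \<bar>f y\<bar> \<le> c \<Longrightarrow> (\<lambda>y. P x y * f y) summable_on S"
  by (rule summable_on_mult_bounded[OF summable_on_P]) (auto simp: P_nonneg)
lemma summable_on_P_mult: "bounded_fun f \<Longrightarrow> (\<lambda>y. P x y * f y) summable_on S"
  by (elim bounded_funE) (rule summable_on_P_mult_abs_le, blast)
lemma summable_on_mu_mult: "bounded_fun f \<Longrightarrow> (\<lambda>y. \<mu> y * f y) summable_on S"
  by (elim bounded_funE) (rule summable_on_mult_bounded[OF summable_on_mu], auto simp: mu_nonneg)

lemma trans_op_abs_le: assumes "\<And>y. \<bar>f y\<bar> \<le> c" shows "\<bar>trans_op P f x\<bar> \<le> c"
proof -
  have s: "(\<lambda>y. P x y * f y) summable_on UNIV" using summable_on_P_mult_abs_le assms by blast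
  have s2: "(\<lambda>y. c * P x y) summable_on UNIV" by (intro summable_on_cmult_right summable_on_P)
  have s3: "(\<lambda>y. - (c * P x y)) summable_on UNIV" using s2 by (simp add: summable_on_uminus)
  have pw: "- (c * P x y) \<le> P x y * f y \<and> P x y * f y \<le> c * P x y" for y
  proof -
    have a: "- c \<le> f y" "f y \<le> c" using assms[of y] by linarith+
    have "P x y * (- c) \<le> P x y * f y" by (rule mult_left_mono[OF a(1) P_nonneg])
    moreover have "P x y * f y \<le> P x y * c" by (rule mult_left_mono[OF a(2) P_nonneg])
    ultimately show ?thesis by (simp add: mult.commute)
  qed
  have "trans_op P f x \<le> (\<Sum>\<^sub>\<infinity>y. c * P x y)" unfolding trans_op_def
    by (rule infsum_mono[OF s s2]) (use pw in blast)
  moreover have "(\<Sum>\<^sub>\<infinity>y. - (c * P x y)) \<le> trans_op P f x" unfolding trans_op_def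
    by (rule infsum_mono[OF s3 s]) (use pw in blast)
  moreover have e: "(\<Sum>\<^sub>\<infinity>y. c * P x y) = c" by (simp add: infsum_cmult_right' infsum_P)
  moreover have "(\<Sum>\<^sub>\<infinity>y. - (c * P x y)) = - c" unfolding infsum_uminus e ..
  ultimately have "trans_op P f x \<le> c" "- c \<le> trans_op P f x" by simp_all
  then show ?thesis by (simp only: abs_le_iff) simp
qed

lemma bounded_fun_trans_op: "bounded_fun f \<Longrightarrow> bounded_fun (trans_op P f)"
  by (elim bounded_funE, rule bounded_funI, rule trans_op_abs_le)

lemma trans_op_add: "bounded_fun f \<Longrightarrow> bounded_fun g \<Longrightarrow> trans_op P (\<lambda>y. f y + g y) x = trans_op P f x + trans_op P g x"
  unfolding trans_op_def by (simp add: distrib_left infsum_add summable_on_P_mult)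
lemma trans_op_diff: "bounded_fun f \<Longrightarrow> bounded_fun g \<Longrightarrow> trans_op P (\<lambda>y. f y - g y) x = trans_op P f x - trans_op P g x"
  unfolding trans_op_def by (simp add: right_diff_distrib infsum_diff summable_on_P_mult)
lemma trans_op_cmult: "trans_op P (\<lambda>y. c * f y) x = c * trans_op P f x"
  unfolding trans_op_def by (simp add: infsum_cmult_right'[symmetric] algebra_simps)
lemma trans_op_const: "trans_op P (\<lambda>y. c) x = c"
  unfolding trans_op_def by (simp add: infsum_cmult_left' infsum_P)
lemma trans_op_mono: "bounded_fun f \<Longrightarrow> bounded_fun g \<Longrightarrow> (\<And>y. f y \<le> g y) \<Longrightarrow> trans_op P f x \<le> trans_op P g x"
  unfolding trans_op_def by (rule infsum_mono) (auto simp: summable_on_P_mult P_nonneg mult_left_mono)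
lemma trans_op_sum: "finite J \<Longrightarrow> (\<And>j. j \<in> J \<Longrightarrow> bounded_fun (F j)) \<Longrightarrow>
    trans_op P (\<lambda>y. \<Sum>j\<in>J. F j y) x = (\<Sum>j\<in>J. trans_op P (F j) x)"
proof (induction J rule: finite_induct)
  case empty then show ?case using trans_op_const[of 0] by simp
next
  case (insert a J)
  have b: "bounded_fun (\<lambda>y. \<Sum>j\<in>J. F j y)"
  proof -
    have "\<forall>j\<in>J. \<exists>c. \<forall>y. \<bar>F j y\<bar> \<le> c" using insert.prems unfolding bounded_fun_def by blast
    then obtain c where c: "\<And>j y. j \<in> J \<Longrightarrow> \<bar>F j y\<bar> \<le> c j" by metis
    show ?thesis by (rule bounded_funI[of _ "\<Sum>j\<in>J. c j"]) (rule order.trans[OF sum_abs], rule sum_mono, rule c)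
  qed
  have "trans_op P (\<lambda>y. \<Sum>j\<in>insert a J. F j y) x = trans_op P (\<lambda>y. F a y + (\<Sum>j\<in>J. F j y)) x"
    using insert.hyps by simp
  also have "\<dots> = trans_op P (F a) x + trans_op P (\<lambda>y. \<Sum>j\<in>J. F j y) x"
    by (rule trans_op_add) (use insert.prems b in auto)
  finally show ?case using insert by simp
qed

lemma trans_op_uminus: "trans_op P (\<lambda>y. - f y) x = - trans_op P f x"
  using trans_op_cmult[of "-1" f x] by simp

lemma trans_op_nonneg: assumes "bounded_fun f" "\<And>y. 0 \<le> f y" shows "0 \<le> trans_op P f x"
proof -
  have "trans_op P (\<lambda>_. 0) x \<le> trans_op P f x" by (rule trans_op_mono) (use assms bounded_fun_const in auto)
  then show ?thesis by (simp add: trans_op_const)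
qed

lemma mu_pos_step: assumes "0 < \<mu> a" "0 < P a b" shows "0 < \<mu> b"
proof -
  have "(\<Sum>x\<in>{a}. \<mu> x * P x b) \<le> (\<Sum>\<^sub>\<infinity>x. \<mu> x * P x b)"
    by (rule finite_sum_le_infsum) (use mu_invariant has_sum_imp_summable in \<open>auto simp: mu_nonneg P_nonneg\<close>)
  also have "\<dots> = \<mu> b" using mu_invariant infsumI by blast
  moreover have "0 < \<mu> a * P a b" by (rule mult_pos_pos[OF assms])
  ultimately show ?thesis by simp
qed

lemma mu_pos: "0 < \<mu> x"
proof -
  have "\<exists>x0. 0 < \<mu> x0"
  proof (rule ccontr)
    assume a: "\<not> ?thesis"
    have "\<mu> x = 0" for x
    proof -
      from a have "\<not> 0 < \<mu> x" by blast
      then show ?thesis using mu_nonneg[of x] by linarith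
    qed
    then have "\<mu> = (\<lambda>_. 0)" by (simp add: fun_eq_iff)
    then have "((\<lambda>_::'s. 0::real) has_sum 1) UNIV" using mu_has_sum by simp
    from has_sum_unique[OF this has_sum_0_simp] show False by simp
  qed
  then obtain x0 where x0: "0 < \<mu> x0" by blast
  have "(x0, x) \<in> {(a, b). 0 < P a b}\<^sup>*" using irr unfolding irreducible_chain_def by blast
  then show ?thesis
  proof (induction rule: rtrancl_induct)
    case base then show ?case using x0 .
  next
    case (step y z) then show ?case using mu_pos_step by blast
  qed
qed

lemma meas_pos: assumes "x \<in> A" shows "0 < meas \<mu> A"
proof -
  have "(\<Sum>x\<in>{x}. \<mu> x) \<le> meas \<mu> A" unfolding meas_def
    by (rule finite_sum_le_infsum) (use assms in \<open>auto simp: summable_on_mu mu_nonneg\<close>)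
  then show ?thesis using mu_pos[of x] by simp
qed

lemma summable_on_mu_P_pairs:
  assumes f: "bounded_fun f" and g: "bounded_fun g"
  shows "(\<lambda>(x, y). \<mu> x * P x y * (f x * g y)) summable_on UNIV \<times> UNIV"
proof -
  obtain cf where cf: "\<And>x. \<bar>f x\<bar> \<le> cf" using f by (metis bounded_funE)
  obtain cg where cg: "\<And>x. \<bar>g x\<bar> \<le> cg" using g by (metis bounded_funE)
  define w where "w = (\<lambda>(x, y). \<mu> x * P x y)"
  have w_nonneg: "0 \<le> w z" for z unfolding w_def by (simp add: mu_nonneg P_nonneg split: prod.split)
  have "w summable_on Sigma UNIV (\<lambda>_. UNIV)"
  proof (rule summable_on_SigmaI)
    show "((\<lambda>y. w (x, y)) has_sum \<mu> x * 1) UNIV" for x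
      using has_sum_cmult_right[OF P_has_sum, of "\<mu> x" x] unfolding w_def by simp
    show "(\<lambda>x. \<mu> x * 1) summable_on UNIV" using summable_on_mu by simp
  qed (rule w_nonneg)
  then have "(\<lambda>z. w z * (f (fst z) * g (snd z))) summable_on UNIV \<times> UNIV"
  proof (rule summable_on_mult_bounded[where c="cf * cg"])
    show "\<bar>f (fst z) * g (snd z)\<bar> \<le> cf * cg" for z unfolding abs_mult
      by (rule mult_mono[OF cf cg]) (use cf[of "fst z"] in auto)
  qed (use w_nonneg in auto)
  then show ?thesis by (simp add: w_def case_prod_unfold)
qed

lemma infsum_mu_trans_op_swap:
  assumes f: "bounded_fun f" and g: "bounded_fun g"
  shows "(\<Sum>\<^sub>\<infinity>x. \<mu> x * f x * trans_op P g x) = (\<Sum>\<^sub>\<infinity>y. \<mu> y * g y * trans_op P f y)"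
proof -
  define F where "F = (\<lambda>x y. \<mu> x * P x y * (f x * g y))"
  have "(\<Sum>\<^sub>\<infinity>x. \<mu> x * f x * trans_op P g x) = (\<Sum>\<^sub>\<infinity>x. \<Sum>\<^sub>\<infinity>y. F x y)"
    unfolding trans_op_def F_def infsum_cmult_right'[symmetric] by (simp add: algebra_simps)
  also have "\<dots> = (\<Sum>\<^sub>\<infinity>y. \<Sum>\<^sub>\<infinity>x. F x y)"
    by (rule infsum_swap_banach) (use summable_on_mu_P_pairs[OF f g] in \<open>simp add: F_def\<close>)
  also have "\<dots> = (\<Sum>\<^sub>\<infinity>y. \<Sum>\<^sub>\<infinity>x. \<mu> y * g y * (P y x * f x))"
    unfolding F_def by (intro infsum_cong) (use mu_reversible in \<open>simp add: algebra_simps\<close>)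
  also have "\<dots> = (\<Sum>\<^sub>\<infinity>y. \<mu> y * g y * trans_op P f y)"
    unfolding trans_op_def infsum_cmult_right' ..
  finally show ?thesis .
qed

lemma infsum_mu_trans_op: "bounded_fun g \<Longrightarrow> (\<Sum>\<^sub>\<infinity>x. \<mu> x * trans_op P g x) = (\<Sum>\<^sub>\<infinity>x. \<mu> x * g x)"
  using infsum_mu_trans_op_swap[OF bounded_fun_const[of 1], of g] by (simp add: trans_op_const)

lemma infsum_mu_trans_op_diff:
  assumes g: "bounded_fun g"
  shows "(\<Sum>\<^sub>\<infinity>x. \<mu> x * (trans_op P g x - g x)) = 0"
proof -
  have "(\<Sum>\<^sub>\<infinity>x. \<mu> x * trans_op P g x - \<mu> x * g x) = 0"
    using summable_on_mu_mult[OF bounded_fun_trans_op[OF g]] summable_on_mu_mult[OF g]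
    by (simp add: infsum_diff infsum_mu_trans_op[OF g])
  then show ?thesis by (simp add: algebra_simps)
qed

text \<open>By invariance of \<open>\<mu>\<close>, \<open>Pw - w\<close> has \<open>\<mu>\<close>-integral zero, and \<open>\<mu>\<close> is strictly positive.\<close>
lemma bounded_subharmonic_harmonic:
  assumes wb: "bounded_fun w" and sub: "\<And>x. w x \<le> trans_op P w x"
  shows "trans_op P w x = w x"
proof -
  have Pwb: "bounded_fun (trans_op P w)" using wb by (rule bounded_fun_trans_op)
  have "(\<Sum>\<^sub>\<infinity>x. \<mu> x * (trans_op P w x - w x)) = 0" by (rule infsum_mu_trans_op_diff[OF wb])
  then have "\<mu> x * (trans_op P w x - w x) = 0"
    by (intro nonneg_infsum_le_0D[where A=UNIV])
      (auto simp: summable_on_mu_mult bounded_fun_diff Pwb wb mu_nonneg sub)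
  then show ?thesis using mu_pos[of x] by simp
qed

text \<open>For harmonic \<open>w\<close>, the local variance \<open>P(w - w x)\<^sup>2 (x) = P(w\<^sup>2) x - (w x)\<^sup>2\<close> is nonnegative with
  \<open>\<mu>\<close>-integral zero, so it vanishes; hence \<open>w\<close> is constant along every edge, and irreducibility
  spreads this over the whole state space.\<close>
lemma bounded_harmonic_const:
  assumes wb: "bounded_fun w" and harm: "\<And>x. trans_op P w x = w x"
  shows "w x = w y"
proof -
  have w2b: "bounded_fun (\<lambda>y. w y * w y)" using bounded_fun_mult[OF wb wb] .
  define v where "v x = trans_op P (\<lambda>y. w y * w y) x - w x * w x" for x
  have v_alt: "v x = trans_op P (\<lambda>y. (w y - w x) * (w y - w x)) x" for x
  proof -
    have "trans_op P (\<lambda>y. (w y - w x) * (w y - w x)) x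
        = trans_op P (\<lambda>y. w y * w y + ((-2 * w x) * w y + w x * w x)) x"
      by (rule arg_cong[where f="\<lambda>f. trans_op P f x"]) (auto simp: fun_eq_iff algebra_simps)
    also have "\<dots> = trans_op P (\<lambda>y. w y * w y) x + trans_op P (\<lambda>y. (-2 * w x) * w y + w x * w x) x"
      by (rule trans_op_add[OF w2b]) (intro bounded_fun_add bounded_fun_cmult wb bounded_fun_const)
    also have "trans_op P (\<lambda>y. (-2 * w x) * w y + w x * w x) x = (-2 * w x) * trans_op P w x + w x * w x"
      by (simp only: trans_op_add[OF bounded_fun_cmult[OF wb] bounded_fun_const] trans_op_cmult trans_op_const)
    finally show ?thesis unfolding v_def harm by simp
  qed
  have "(\<Sum>\<^sub>\<infinity>x. \<mu> x * v x) = 0" unfolding v_def by (rule infsum_mu_trans_op_diff[OF w2b])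
  moreover have "bounded_fun v"
    unfolding v_def by (intro bounded_fun_diff bounded_fun_trans_op w2b)
  moreover have "0 \<le> v x" for x unfolding v_alt
    by (rule trans_op_nonneg) (auto intro!: bounded_fun_mult bounded_fun_diff wb bounded_fun_const)
  ultimately have "\<mu> x * v x = 0" for x
    by (intro nonneg_infsum_le_0D[where A=UNIV and f="\<lambda>x. \<mu> x * v x"])
      (auto simp: summable_on_mu_mult mu_nonneg)
  then have v0: "v x = 0" for x using mu_pos[of x] by (metis less_irrefl mult_eq_0_iff)
  have edge: "w b = w a" if "0 < P a b" for a b
  proof -
    have le: "(\<Sum>\<^sub>\<infinity>y. P a y * ((w y - w a) * (w y - w a))) \<le> 0"
      using v0[of a] v_alt[of a] unfolding trans_op_def by simp
    have sm: "(\<lambda>y. P a y * ((w y - w a) * (w y - w a))) summable_on UNIV"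
      by (rule summable_on_P_mult) (rule bounded_fun_mult bounded_fun_diff wb bounded_fun_const)+
    have "P a b * ((w b - w a) * (w b - w a)) = 0"
      by (rule nonneg_infsum_le_0D[OF le sm _ UNIV_I]) (simp add: P_nonneg)
    then show ?thesis using that by simp
  qed
  have "(x, y) \<in> {(a, b). 0 < P a b}\<^sup>*" using irr unfolding irreducible_chain_def by blast
  then show ?thesis by (induction rule: rtrancl_induct) (auto dest: edge)
qed

lemma bounded_subharmonic_const:
  assumes "bounded_fun w" "\<And>x. w x \<le> trans_op P w x"
  shows "w x = w y"
  using bounded_harmonic_const bounded_subharmonic_harmonic assms by blast

text \<open>The negative part of \<open>u\<close> is subharmonic, hence constant, and it vanishes at \<open>x0\<close>.\<close>
lemma harmonic_nonneg:
  assumes ub: "bounded_fun u" and harm: "\<And>x. x \<in> D \<Longrightarrow> u x = trans_op P u x"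
    and bd: "\<And>x. x \<notin> D \<Longrightarrow> 0 \<le> u x" and x0: "x0 \<notin> D"
  shows "0 \<le> u x"
proof -
  define w where "w x = max (- u x) 0" for x
  have wb: "bounded_fun w" unfolding w_def by (intro bounded_fun_max bounded_fun_uminus ub)
  have P0: "0 \<le> trans_op P w x" for x by (rule trans_op_nonneg[OF wb]) (simp add: w_def)
  have sub: "w x \<le> trans_op P w x" for x
  proof (cases "x \<in> D")
    case True
    have "- u x = trans_op P (\<lambda>y. - u y) x" using harm[OF True] by (simp add: trans_op_uminus)
    also have "\<dots> \<le> trans_op P w x" by (rule trans_op_mono) (auto simp: w_def bounded_fun_uminus ub wb)
    finally show ?thesis using P0[of x] unfolding w_def by simp
  next
    case False then show ?thesis using P0[of x] bd[of x] unfolding w_def by simp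
  qed
  have "w x = w x0" by (rule bounded_subharmonic_const[OF wb sub])
  also have "w x0 = 0" using bd[OF x0] unfolding w_def by simp
  finally show ?thesis unfolding w_def by simp
qed

lemma harmonic_le:
  assumes ub: "bounded_fun u" "bounded_fun v" and harm: "\<And>x. x \<in> D \<Longrightarrow> u x = trans_op P u x \<and> v x = trans_op P v x"
    and bd: "\<And>x. x \<notin> D \<Longrightarrow> u x \<le> v x" and x0: "x0 \<notin> D"
  shows "u x \<le> v x"
proof -
  have "0 \<le> v x - u x"
  proof (rule harmonic_nonneg[where D=D and u="\<lambda>x. v x - u x", OF bounded_fun_diff[OF ub(2) ub(1)] _ _ x0])
    show "v x - u x = trans_op P (\<lambda>x. v x - u x) x" if "x \<in> D" for x
      using harm[OF that] by (simp add: trans_op_diff ub)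
  qed (use bd in auto)
  then show ?thesis by simp
qed

section \<open>Hitting probabilities and equilibrium potentials\<close>

lemma hit_n_bounds: "0 \<le> hit_n P A B n x \<and> hit_n P A B n x \<le> 1"
proof (induction n arbitrary: x)
  case 0 then show ?case by (simp add: infsum_P_nonneg infsum_P_le_1)
next
  case (Suc n)
  have b: "\<forall>y. \<bar>hit_n P A B n y\<bar> \<le> 1" using Suc by (simp add: abs_le_iff)
  have s: "(\<lambda>y. P x y * hit_n P A B n y) summable_on (- (A \<union> B))" by (rule summable_on_P_mult_abs_le[OF b])
  have "(\<Sum>\<^sub>\<infinity>y\<in>- (A \<union> B). P x y * hit_n P A B n y) \<le> (\<Sum>\<^sub>\<infinity>y\<in>- (A \<union> B). P x y)"
    by (rule infsum_mono[OF s summable_on_P]) (use Suc P_nonneg in \<open>auto intro: mult_left_le\<close>)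
  moreover have "0 \<le> (\<Sum>\<^sub>\<infinity>y\<in>- (A \<union> B). P x y * hit_n P A B n y)"
    by (rule infsum_nonneg) (use Suc P_nonneg in auto)
  ultimately show ?case using infsum_P_le_1[of x "- (A \<union> B)"] by simp
qed

lemma bounded_fun_hit_n: "bounded_fun (hit_n P A B n)" by (rule bounded_fun_unit_interval) (rule hit_n_bounds)

lemma sum_hit_n_le_1: "(\<Sum>n<N. hit_n P A B n x) \<le> 1"
proof (induction N arbitrary: x)
  case 0 then show ?case by simp
next
  case (Suc N)
  let ?C = "- (A \<union> B)"
  have "(\<Sum>n<Suc N. hit_n P A B n x) = hit_n P A B 0 x + (\<Sum>n<N. hit_n P A B (Suc n) x)"
    by (rule sum.lessThan_Suc_shift)
  also have "(\<Sum>n<N. hit_n P A B (Suc n) x) = (\<Sum>n<N. \<Sum>\<^sub>\<infinity>y\<in>?C. P x y * hit_n P A B n y)" by simp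
  also have "\<dots> = (\<Sum>\<^sub>\<infinity>y\<in>?C. \<Sum>n<N. P x y * hit_n P A B n y)"
    using infsum_sum_finite[of "{..<N}" "\<lambda>n y. P x y * hit_n P A B n y" ?C] by (simp add: summable_on_P_mult bounded_fun_hit_n)
  also have "\<dots> \<le> (\<Sum>\<^sub>\<infinity>y\<in>?C. P x y)"
  proof (rule infsum_mono)
    show "(\<lambda>y. \<Sum>n<N. P x y * hit_n P A B n y) summable_on ?C"
      using infsum_sum_finite[of "{..<N}" "\<lambda>n y. P x y * hit_n P A B n y" ?C] by (simp add: summable_on_P_mult bounded_fun_hit_n)
    show "P x summable_on ?C" by (rule summable_on_P)
    fix y
    have "(\<Sum>n<N. P x y * hit_n P A B n y) = P x y * (\<Sum>n<N. hit_n P A B n y)" by (simp add: sum_distrib_left)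
    also have "\<dots> \<le> P x y * 1" by (rule mult_left_mono[OF Suc.IH P_nonneg])
    finally show "(\<Sum>n<N. P x y * hit_n P A B n y) \<le> P x y" by simp
  qed
  finally have "(\<Sum>n<Suc N. hit_n P A B n x) \<le> (\<Sum>\<^sub>\<infinity>y\<in>A - B. P x y) + (\<Sum>\<^sub>\<infinity>y\<in>?C. P x y)" by simp
  also have "\<dots> = (\<Sum>\<^sub>\<infinity>y\<in>(A - B) \<union> ?C. P x y)"
    by (rule infsum_Un_disjoint[symmetric]) (auto simp: summable_on_P)
  also have "\<dots> \<le> 1" by (rule infsum_P_le_1)
  finally show ?case .
qed

lemma summable_hit_n: "summable (\<lambda>n. hit_n P A B n x)"
  by (rule summableI_nonneg_bounded[where x=1]) (auto simp: hit_n_bounds sum_hit_n_le_1)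

lemma hitprob_bounds: "0 \<le> hitprob P A B x \<and> hitprob P A B x \<le> 1"
  unfolding hitprob_def using summable_hit_n
  by (auto intro!: suminf_nonneg suminf_le_const simp: hit_n_bounds sum_hit_n_le_1)

lemma bounded_fun_hitprob: "bounded_fun (hitprob P A B)" by (rule bounded_fun_unit_interval) (rule hitprob_bounds)

lemma hitprob_first_step:
  "hitprob P A B x = (\<Sum>\<^sub>\<infinity>y\<in>A - B. P x y) + (\<Sum>\<^sub>\<infinity>y\<in>- (A \<union> B). P x y * hitprob P A B y)"
proof -
  let ?C = "- (A \<union> B)"
  define G where "G = (\<lambda>y n. P x y * hit_n P A B n y)"
  have Gs: "((\<lambda>n. G y n) has_sum P x y * hitprob P A B y) UNIV" for y
  proof -
    have "(\<lambda>n. hit_n P A B n y) sums hitprob P A B y"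
      unfolding hitprob_def using summable_hit_n by (rule summable_sums)
    then have "(\<lambda>n. G y n) sums (P x y * hitprob P A B y)" unfolding G_def by (rule sums_mult)
    then show ?thesis by (rule sums_nonneg_imp_has_sum) (simp add: G_def P_nonneg hit_n_bounds)
  qed
  have "(\<lambda>(y, n). G y n) summable_on Sigma ?C (\<lambda>_. UNIV)"
  proof (rule summable_on_SigmaI)
    show "((\<lambda>n. (\<lambda>(y, n). G y n) (y, n)) has_sum P x y * hitprob P A B y) UNIV" for y using Gs by simp
    show "(\<lambda>y. P x y * hitprob P A B y) summable_on ?C" by (rule summable_on_P_mult[OF bounded_fun_hitprob])
    show "0 \<le> (\<lambda>(y, n). G y n) (y, n)" for y n by (simp add: G_def P_nonneg hit_n_bounds)
  qed
  then have GS': "(\<lambda>(y, n). G y n) summable_on (?C \<times> UNIV)" by simp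
  have "(\<Sum>\<^sub>\<infinity>y\<in>?C. P x y * hitprob P A B y) = (\<Sum>\<^sub>\<infinity>y\<in>?C. \<Sum>\<^sub>\<infinity>n. G y n)"
  proof (rule infsum_cong)
    fix y show "P x y * hitprob P A B y = (\<Sum>\<^sub>\<infinity>n. G y n)" using infsumI[OF Gs[of y]] by simp
  qed
  also have "\<dots> = (\<Sum>\<^sub>\<infinity>n. \<Sum>\<^sub>\<infinity>y\<in>?C. G y n)" by (rule infsum_swap_banach[OF GS'])
  finally have e1: "(\<Sum>\<^sub>\<infinity>y\<in>?C. P x y * hitprob P A B y) = (\<Sum>\<^sub>\<infinity>n. hit_n P A B (Suc n) x)"
    by (simp add: G_def)
  have "(\<lambda>n. \<Sum>\<^sub>\<infinity>y\<in>?C. G y n) summable_on UNIV"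
  proof -
    have "(\<lambda>(n, y). G y n) summable_on (UNIV \<times> ?C)"
      using GS' summable_on_swap[of "\<lambda>(y, n). G y n" ?C UNIV] by simp
    then show ?thesis using summable_on_Sigma_banach[of "\<lambda>n y. G y n" UNIV "\<lambda>_. ?C"] by simp
  qed
  then have "(\<lambda>n. hit_n P A B (Suc n) x) summable_on UNIV" by (simp add: G_def)
  then have "(\<Sum>\<^sub>\<infinity>n. hit_n P A B (Suc n) x) = (\<Sum>n. hit_n P A B (Suc n) x)"
    using has_sum_imp_sums[OF has_sum_infsum] sums_unique by blast
  also have "\<dots> = hitprob P A B x - hit_n P A B 0 x" unfolding hitprob_def
    by (rule suminf_split_head[OF summable_hit_n])
  finally show ?thesis using e1 by simp
qed

lemma eq_pot_bounds: "0 \<le> eq_pot P A B x \<and> eq_pot P A B x \<le> 1"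
  unfolding eq_pot_def using hitprob_bounds by auto
lemma bounded_fun_eq_pot: "bounded_fun (eq_pot P A B)" by (rule bounded_fun_unit_interval) (rule eq_pot_bounds)

lemma hitprob_eq_trans_op:
  assumes disj: "A \<inter> B = {}"
  shows "hitprob P A B x = trans_op P (eq_pot P A B) x"
proof -
  let ?h = "eq_pot P A B" and ?C = "- (A \<union> B)"
  have s: "(\<lambda>y. P x y * ?h y) summable_on S" for S by (rule summable_on_P_mult[OF bounded_fun_eq_pot])
  have "trans_op P ?h x = (\<Sum>\<^sub>\<infinity>y\<in>A \<union> (B \<union> ?C). P x y * ?h y)" unfolding trans_op_def
    by (rule arg_cong[where f="infsum _"]) auto
  also have "\<dots> = (\<Sum>\<^sub>\<infinity>y\<in>A. P x y * ?h y) + (\<Sum>\<^sub>\<infinity>y\<in>B \<union> ?C. P x y * ?h y)"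
    by (rule infsum_Un_disjoint) (use disj s in auto)
  also have "(\<Sum>\<^sub>\<infinity>y\<in>B \<union> ?C. P x y * ?h y) = (\<Sum>\<^sub>\<infinity>y\<in>B. P x y * ?h y) + (\<Sum>\<^sub>\<infinity>y\<in>?C. P x y * ?h y)"
    by (rule infsum_Un_disjoint) (use s in auto)
  also have "(\<Sum>\<^sub>\<infinity>y\<in>A. P x y * ?h y) = (\<Sum>\<^sub>\<infinity>y\<in>A - B. P x y)"
    using disj by (intro infsum_cong_neutral) (auto simp: eq_pot_def)
  also have "(\<Sum>\<^sub>\<infinity>y\<in>B. P x y * ?h y) = 0"
    using disj by (intro infsum_0) (auto simp: eq_pot_def)
  also have "(\<Sum>\<^sub>\<infinity>y\<in>?C. P x y * ?h y) = (\<Sum>\<^sub>\<infinity>y\<in>?C. P x y * hitprob P A B y)"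
    by (rule infsum_cong) (simp add: eq_pot_def)
  finally show ?thesis using hitprob_first_step[of A B x] by simp
qed

lemma eq_pot_harmonic:
  assumes "A \<inter> B = {}" "x \<notin> A \<union> B"
  shows "eq_pot P A B x = trans_op P (eq_pot P A B) x"
  using assms hitprob_eq_trans_op[OF assms(1)] by (simp add: eq_pot_def)

lemma eq_pot_swap:
  assumes disj: "A \<inter> B = {}" and ne: "a0 \<in> A \<union> B"
  shows "eq_pot P B A x = 1 - eq_pot P A B x"
proof -
  let ?D = "- (A \<union> B)"
  have disj': "B \<inter> A = {}" using disj by blast
  have vb: "bounded_fun (\<lambda>x. 1 - eq_pot P A B x)" by (intro bounded_fun_diff bounded_fun_const bounded_fun_eq_pot)
  have harm: "eq_pot P B A x = trans_op P (eq_pot P B A) x \<and> 1 - eq_pot P A B x = trans_op P (\<lambda>x. 1 - eq_pot P A B x) x"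
    if "x \<in> ?D" for x
  proof
    show "eq_pot P B A x = trans_op P (eq_pot P B A) x" by (rule eq_pot_harmonic[OF disj']) (use that in auto)
    have "eq_pot P A B x = trans_op P (eq_pot P A B) x" by (rule eq_pot_harmonic[OF disj]) (use that in auto)
    then show "1 - eq_pot P A B x = trans_op P (\<lambda>x. 1 - eq_pot P A B x) x"
      by (simp add: trans_op_diff bounded_fun_const bounded_fun_eq_pot trans_op_const)
  qed
  have bd: "eq_pot P B A x = 1 - eq_pot P A B x" if "x \<notin> ?D" for x
    using that disj by (auto simp: eq_pot_def)
  have a0: "a0 \<notin> ?D" using ne by auto
  have "eq_pot P B A x \<le> 1 - eq_pot P A B x"
    by (rule harmonic_le[OF bounded_fun_eq_pot vb harm _ a0]) (use bd in auto)
  moreover have "1 - eq_pot P A B x \<le> eq_pot P B A x"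
    by (rule harmonic_le[OF vb bounded_fun_eq_pot _ _ a0]) (use bd harm in auto)
  ultimately show ?thesis by simp
qed

lemma hitprob_swap:
  assumes disj: "A \<inter> B = {}" and ne: "a0 \<in> A \<union> B"
  shows "hitprob P B A x = 1 - trans_op P (eq_pot P A B) x"
proof -
  have disj': "B \<inter> A = {}" using disj by blast
  have e: "eq_pot P B A = (\<lambda>x. 1 - eq_pot P A B x)" by (rule ext) (rule eq_pot_swap[OF disj ne])
  have "hitprob P B A x = trans_op P (eq_pot P B A) x" by (rule hitprob_eq_trans_op[OF disj'])
  also have "\<dots> = trans_op P (\<lambda>x. 1 - eq_pot P A B x) x" unfolding e ..
  also have "\<dots> = 1 - trans_op P (eq_pot P A B) x" by (simp add: trans_op_diff bounded_fun_const bounded_fun_eq_pot trans_op_const)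
  finally show ?thesis .
qed

section \<open>Dirichlet form and capacity\<close>

lemma dirichlet_form_eq:
  assumes "bounded_fun f" "bounded_fun g"
  shows "dirichlet_form P \<mu> f g = (\<Sum>\<^sub>\<infinity>x. \<mu> x * (f x * g x)) - (\<Sum>\<^sub>\<infinity>x. \<mu> x * f x * trans_op P g x)"
proof -
  have "dirichlet_form P \<mu> f g = (\<Sum>\<^sub>\<infinity>x. \<mu> x * (f x * g x) - \<mu> x * f x * trans_op P g x)"
    unfolding dirichlet_form_def by (rule infsum_cong) (simp add: algebra_simps)
  show ?thesis unfolding \<open>dirichlet_form P \<mu> f g = _\<close>
  proof (rule infsum_diff)
    show "(\<lambda>x. \<mu> x * (f x * g x)) summable_on UNIV" by (rule summable_on_mu_mult) (intro bounded_fun_mult assms)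
    have "(\<lambda>x. \<mu> x * (f x * trans_op P g x)) summable_on UNIV" by (rule summable_on_mu_mult) (intro bounded_fun_mult assms bounded_fun_trans_op)
    then show "(\<lambda>x. \<mu> x * f x * trans_op P g x) summable_on UNIV" by (simp add: mult.assoc)
  qed
qed

lemma summable_dirichlet_form_terms: "bounded_fun f \<Longrightarrow> bounded_fun g \<Longrightarrow> (\<lambda>x. \<mu> x * (f x * (g x - trans_op P g x))) summable_on A"
  by (intro summable_on_mu_mult bounded_fun_mult bounded_fun_diff bounded_fun_trans_op)

lemma dirichlet_form_sym: assumes "bounded_fun f" "bounded_fun g" shows "dirichlet_form P \<mu> f g = dirichlet_form P \<mu> g f"
  unfolding dirichlet_form_eq[OF assms] dirichlet_form_eq[OF assms(2,1)] infsum_mu_trans_op_swap[OF assms] by (simp add: mult.commute)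

lemma trans_op_mult_diffs:
  assumes f: "bounded_fun f" and g: "bounded_fun g"
  shows "trans_op P (\<lambda>y. (f x - f y) * (g x - g y)) x
     = f x * g x - f x * trans_op P g x - (g x * trans_op P f x - trans_op P (\<lambda>y. f y * g y) x)"
proof -
  have e0: "trans_op P (\<lambda>y. (f x - f y) * (g x - g y)) x
      = trans_op P (\<lambda>y. f y * g y + ((- f x) * g y + ((- g x) * f y + f x * g x))) x"
    by (rule arg_cong[where f="\<lambda>f. trans_op P f x"]) (auto simp: fun_eq_iff algebra_simps)
  have e1: "trans_op P (\<lambda>y. f y * g y + ((- f x) * g y + ((- g x) * f y + f x * g x))) x
      = trans_op P (\<lambda>y. f y * g y) x + trans_op P (\<lambda>y. (- f x) * g y + ((- g x) * f y + f x * g x)) x"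
    by (rule trans_op_add[where f="\<lambda>y. f y * g y"]) (rule bounded_fun_mult bounded_fun_add bounded_fun_cmult bounded_fun_const f g)+
  have e2: "trans_op P (\<lambda>y. (- f x) * g y + ((- g x) * f y + f x * g x)) x
      = trans_op P (\<lambda>y. (- f x) * g y) x + trans_op P (\<lambda>y. (- g x) * f y + f x * g x) x"
    by (rule trans_op_add[where f="\<lambda>y. (- f x) * g y"]) (rule bounded_fun_mult bounded_fun_add bounded_fun_cmult bounded_fun_const f g)+
  have e3: "trans_op P (\<lambda>y. (- g x) * f y + f x * g x) x
      = trans_op P (\<lambda>y. (- g x) * f y) x + trans_op P (\<lambda>y. f x * g x) x"
    by (rule trans_op_add[where f="\<lambda>y. (- g x) * f y"]) (rule bounded_fun_mult bounded_fun_add bounded_fun_cmult bounded_fun_const f g)+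
  show ?thesis unfolding e0 e1 e2 e3 trans_op_cmult trans_op_const by simp
qed

lemma dirichlet_form_eq_edge_sum:
  assumes f: "bounded_fun f" and g: "bounded_fun g"
  shows "2 * dirichlet_form P \<mu> f g = (\<Sum>\<^sub>\<infinity>x. \<mu> x * trans_op P (\<lambda>y. (f x - f y) * (g x - g y)) x)"
proof -
  have fg: "bounded_fun (\<lambda>y. f y * g y)" by (rule bounded_fun_mult[OF f g])
  have s1: "(\<lambda>x. \<mu> x * (f x * g x)) summable_on UNIV" by (rule summable_on_mu_mult[OF fg])
  have s2: "(\<lambda>x. \<mu> x * f x * trans_op P g x) summable_on UNIV"
    using summable_on_mu_mult[OF bounded_fun_mult[OF f bounded_fun_trans_op[OF g]]] by (simp add: mult.assoc)
  have s3: "(\<lambda>x. \<mu> x * g x * trans_op P f x) summable_on UNIV"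
    using summable_on_mu_mult[OF bounded_fun_mult[OF g bounded_fun_trans_op[OF f]]] by (simp add: mult.assoc)
  have s4: "(\<lambda>x. \<mu> x * trans_op P (\<lambda>y. f y * g y) x) summable_on UNIV" by (rule summable_on_mu_mult[OF bounded_fun_trans_op[OF fg]])
  have "(\<Sum>\<^sub>\<infinity>x. \<mu> x * trans_op P (\<lambda>y. (f x - f y) * (g x - g y)) x)
     = (\<Sum>\<^sub>\<infinity>x. \<mu> x * (f x * g x) - \<mu> x * f x * trans_op P g x - (\<mu> x * g x * trans_op P f x - \<mu> x * trans_op P (\<lambda>y. f y * g y) x))"
  proof (rule infsum_cong)
    fix x
    show "\<mu> x * trans_op P (\<lambda>y. (f x - f y) * (g x - g y)) x =
      \<mu> x * (f x * g x) - \<mu> x * f x * trans_op P g x - (\<mu> x * g x * trans_op P f x - \<mu> x * trans_op P (\<lambda>y. f y * g y) x)"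
      unfolding trans_op_mult_diffs[OF f g] by (simp only: right_diff_distrib mult.assoc)
  qed
  also have "\<dots> = (\<Sum>\<^sub>\<infinity>x. \<mu> x * (f x * g x)) - (\<Sum>\<^sub>\<infinity>x. \<mu> x * f x * trans_op P g x)
       - ((\<Sum>\<^sub>\<infinity>x. \<mu> x * g x * trans_op P f x) - (\<Sum>\<^sub>\<infinity>x. \<mu> x * trans_op P (\<lambda>y. f y * g y) x))"
    by (rule infsum_diff_diff[OF s1 s2 s3 s4])
  also have "(\<Sum>\<^sub>\<infinity>x. \<mu> x * g x * trans_op P f x) = (\<Sum>\<^sub>\<infinity>x. \<mu> x * f x * trans_op P g x)"
    by (rule infsum_mu_trans_op_swap[OF g f])
  also have "(\<Sum>\<^sub>\<infinity>x. \<mu> x * trans_op P (\<lambda>y. f y * g y) x) = (\<Sum>\<^sub>\<infinity>x. \<mu> x * (f x * g x))"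
    by (rule infsum_mu_trans_op[OF fg])
  finally show ?thesis unfolding dirichlet_form_eq[OF f g] by simp
qed

lemma dirichlet_form_nonneg: assumes g: "bounded_fun g" shows "0 \<le> dirichlet_form P \<mu> g g"
proof -
  have "0 \<le> (\<Sum>\<^sub>\<infinity>x. \<mu> x * trans_op P (\<lambda>y. (g x - g y) * (g x - g y)) x)"
  proof (rule infsum_nonneg)
    fix x
    have b: "bounded_fun (\<lambda>y. (g x - g y) * (g x - g y))" by (rule bounded_fun_mult bounded_fun_diff bounded_fun_const g)+
    have "0 \<le> trans_op P (\<lambda>y. (g x - g y) * (g x - g y)) x" by (rule trans_op_nonneg[OF b]) simp
    then show "0 \<le> \<mu> x * trans_op P (\<lambda>y. (g x - g y) * (g x - g y)) x" by (rule mult_nonneg_nonneg[OF mu_nonneg])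
  qed
  then show ?thesis using dirichlet_form_eq_edge_sum[OF g g] by simp
qed

lemma bounded_fun_trans_op_mult_diffs:
  assumes f: "bounded_fun f" and g: "bounded_fun g"
  shows "bounded_fun (\<lambda>x. trans_op P (\<lambda>y. (f x - f y) * (g x - g y)) x)"
proof -
  obtain c where c: "\<And>x. \<bar>f x\<bar> \<le> c" using f by (metis bounded_funE)
  obtain d where d: "\<And>x. \<bar>g x\<bar> \<le> d" using g by (metis bounded_funE)
  have "\<bar>trans_op P (\<lambda>y. (f x - f y) * (g x - g y)) x\<bar> \<le> (2 * c) * (2 * d)" for x
    by (rule trans_op_abs_le) (rule abs_diff_mult_diff_le; rule c d)
  then show ?thesis by (rule bounded_funI)
qed

lemma dirichlet_form_le_scaled:
  assumes f: "bounded_fun f" and h: "bounded_fun h"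
    and pw: "\<And>a b. (f a - f b) * (f a - f b) \<le> L * ((f a - f b) * (h a - h b))"
  shows "dirichlet_form P \<mu> f f \<le> L * dirichlet_form P \<mu> f h"
proof -
  let ?Qff = "\<lambda>x. trans_op P (\<lambda>y. (f x - f y) * (f x - f y)) x"
    and ?Qfh = "\<lambda>x. trans_op P (\<lambda>y. (f x - f y) * (h x - h y)) x"
  have "2 * dirichlet_form P \<mu> f f = (\<Sum>\<^sub>\<infinity>x. \<mu> x * ?Qff x)"
    by (rule dirichlet_form_eq_edge_sum[OF f f])
  also have "\<dots> \<le> (\<Sum>\<^sub>\<infinity>x. L * (\<mu> x * ?Qfh x))"
  proof (rule infsum_mono)
    show "(\<lambda>x. \<mu> x * ?Qff x) summable_on UNIV"
      by (intro summable_on_mu_mult bounded_fun_trans_op_mult_diffs f)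
    show "(\<lambda>x. L * (\<mu> x * ?Qfh x)) summable_on UNIV"
      by (intro summable_on_cmult_right summable_on_mu_mult bounded_fun_trans_op_mult_diffs f h)
    fix x
    have "?Qff x \<le> trans_op P (\<lambda>y. L * ((f x - f y) * (h x - h y))) x"
      by (rule trans_op_mono[OF _ _ pw]) (rule bounded_fun_cmult bounded_fun_mult bounded_fun_diff bounded_fun_const f h)+
    then have "?Qff x \<le> L * ?Qfh x" by (simp only: trans_op_cmult)
    from mult_left_mono[OF this mu_nonneg[of x]]
    show "\<mu> x * ?Qff x \<le> L * (\<mu> x * ?Qfh x)" by (simp add: mult.left_commute)
  qed
  also have "\<dots> = L * (2 * dirichlet_form P \<mu> f h)"
    unfolding infsum_cmult_right' dirichlet_form_eq_edge_sum[OF f h] ..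
  finally show ?thesis by simp
qed

lemma dirichlet_form_diff:
  assumes f: "bounded_fun f" and g: "bounded_fun g"
  shows "dirichlet_form P \<mu> (\<lambda>x. f x - g x) (\<lambda>x. f x - g x) = dirichlet_form P \<mu> f f - 2 * dirichlet_form P \<mu> f g + dirichlet_form P \<mu> g g"
proof -
  have "dirichlet_form P \<mu> (\<lambda>x. f x - g x) (\<lambda>x. f x - g x)
     = (\<Sum>\<^sub>\<infinity>x. \<mu> x * (f x * (f x - trans_op P f x)) - \<mu> x * (f x * (g x - trans_op P g x))
          - (\<mu> x * (g x * (f x - trans_op P f x)) - \<mu> x * (g x * (g x - trans_op P g x))))"
    unfolding dirichlet_form_def by (rule infsum_cong) (simp add: trans_op_diff f g algebra_simps)
  also have "\<dots> = dirichlet_form P \<mu> f f - dirichlet_form P \<mu> f g - (dirichlet_form P \<mu> g f - dirichlet_form P \<mu> g g)"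
    unfolding dirichlet_form_def by (rule infsum_diff_diff) (rule summable_dirichlet_form_terms; rule f g)+
  finally show ?thesis using dirichlet_form_sym[OF f g] by simp
qed

lemma dirichlet_form_eq_pot:
  assumes disj: "A \<inter> B = {}" and a0: "a0 \<in> A" and f: "bounded_fun f"
    and f1: "\<And>x. x \<in> A \<Longrightarrow> f x = 1" and f0: "\<And>x. x \<in> B \<Longrightarrow> f x = 0"
  shows "dirichlet_form P \<mu> f (eq_pot P A B) = cap P \<mu> A B"
  unfolding dirichlet_form_def cap_def
proof (rule infsum_cong_neutral)
  let ?h = "eq_pot P A B"
  show "\<mu> x * (f x * (?h x - trans_op P ?h x)) = 0" if "x \<in> UNIV - A" for x
  proof (cases "x \<in> B")
    case True then show ?thesis using f0 by simp
  next
    case False then show ?thesis using that eq_pot_harmonic[OF disj, of x] by simp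
  qed
  show "\<mu> x * (f x * (?h x - trans_op P ?h x)) = \<mu> x * hitprob P B A x" if "x \<in> UNIV \<inter> A" for x
    using that f1 hitprob_swap[OF disj, of a0 x] a0 by (simp add: eq_pot_def)
qed simp

text \<open>Dirichlet principle: \<open>D(f, f) = D(h, h) + D(f - h, f - h)\<close>, because \<open>D(f, h) = D(h, h) = cap(A, B)\<close>.\<close>
lemma cap_le_dirichlet_form:
  assumes disj: "A \<inter> B = {}" and a0: "a0 \<in> A" and f: "bounded_fun f"
    and f1: "\<And>x. x \<in> A \<Longrightarrow> f x = 1" and f0: "\<And>x. x \<in> B \<Longrightarrow> f x = 0"
  shows "cap P \<mu> A B \<le> dirichlet_form P \<mu> f f"
proof -
  let ?h = "eq_pot P A B"
  have hh: "dirichlet_form P \<mu> ?h ?h = cap P \<mu> A B"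
    by (rule dirichlet_form_eq_pot[OF disj a0 bounded_fun_eq_pot]) (use disj in \<open>auto simp: eq_pot_def\<close>)
  have fh: "dirichlet_form P \<mu> f ?h = cap P \<mu> A B" by (rule dirichlet_form_eq_pot[OF disj a0 f f1 f0])
  have "0 \<le> dirichlet_form P \<mu> (\<lambda>x. f x - ?h x) (\<lambda>x. f x - ?h x)" by (rule dirichlet_form_nonneg) (intro bounded_fun_diff f bounded_fun_eq_pot)
  then show ?thesis unfolding dirichlet_form_diff[OF f bounded_fun_eq_pot] hh fh by simp
qed

text \<open>If the capacity vanished, \<open>h(A, B)\<close> would be subharmonic everywhere, hence constant.\<close>
lemma cap_pos:
  assumes disj: "A \<inter> B = {}" and a0: "a0 \<in> A" and b0: "b0 \<in> B"
  shows "0 < cap P \<mu> A B"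
proof (rule ccontr)
  let ?h = "eq_pot P A B"
  assume "\<not> 0 < cap P \<mu> A B"
  then have le: "(\<Sum>\<^sub>\<infinity>x\<in>A. \<mu> x * hitprob P B A x) \<le> 0" unfolding cap_def by simp
  have z: "\<mu> x * hitprob P B A x = 0" if "x \<in> A" for x
    by (rule nonneg_infsum_le_0D[OF le summable_on_mu_mult[OF bounded_fun_hitprob] _ that]) (simp add: mu_nonneg hitprob_bounds)
  have sub: "?h x \<le> trans_op P ?h x" for x
  proof -
    consider "x \<in> A" | "x \<in> B" | "x \<notin> A \<union> B" by blast
    then show ?thesis
    proof cases
      case 1
      then have "hitprob P B A x = 0" using z[OF 1] mu_pos[of x] by simp
      then show ?thesis using 1 hitprob_swap[OF disj, of a0 x] a0 by (simp add: eq_pot_def)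
    next
      case 2
      then have "?h x = 0" using disj by (auto simp: eq_pot_def)
      then show ?thesis using trans_op_nonneg[OF bounded_fun_eq_pot, of A B x] eq_pot_bounds by simp
    next
      case 3 then show ?thesis using eq_pot_harmonic[OF disj 3] by simp
    qed
  qed
  have "?h a0 = ?h b0" by (rule bounded_subharmonic_const[OF bounded_fun_eq_pot sub])
  moreover have "b0 \<notin> A" using disj b0 by blast
  ultimately show False using a0 b0 by (auto simp: eq_pot_def)
qed

text \<open>\<open>h - Ph\<close> has \<open>\<mu>\<close>-integral zero and is supported on \<open>A \<union> B\<close>.\<close>
lemma cap_eq_infsum_target:
  assumes disj: "A \<inter> B = {}" and a0: "a0 \<in> A"
  shows "cap P \<mu> A B = (\<Sum>\<^sub>\<infinity>x\<in>B. \<mu> x * hitprob P A B x)"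
proof -
  let ?h = "eq_pot P A B"
  let ?F = "\<lambda>x. \<mu> x * (?h x - trans_op P ?h x)"
  have Fs: "?F summable_on S" for S by (intro summable_on_mu_mult bounded_fun_diff bounded_fun_eq_pot bounded_fun_trans_op)
  have "(\<Sum>\<^sub>\<infinity>x. ?F x) = - (\<Sum>\<^sub>\<infinity>x. \<mu> x * (trans_op P ?h x - ?h x))"
    unfolding infsum_uminus[symmetric] by (simp add: algebra_simps)
  then have z: "(\<Sum>\<^sub>\<infinity>x. ?F x) = 0" by (simp add: infsum_mu_trans_op_diff[OF bounded_fun_eq_pot])
  have "(\<Sum>\<^sub>\<infinity>x. ?F x) = (\<Sum>\<^sub>\<infinity>x\<in>A \<union> B. ?F x)"
    by (rule infsum_cong_neutral) (use eq_pot_harmonic[OF disj] in auto)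
  also have "\<dots> = (\<Sum>\<^sub>\<infinity>x\<in>A. ?F x) + (\<Sum>\<^sub>\<infinity>x\<in>B. ?F x)"
    by (rule infsum_Un_disjoint[OF Fs Fs disj])
  also have "(\<Sum>\<^sub>\<infinity>x\<in>A. ?F x) = cap P \<mu> A B" unfolding cap_def
  proof (rule infsum_cong)
    fix x assume x: "x \<in> A"
    have "hitprob P B A x = 1 - trans_op P ?h x" by (rule hitprob_swap[OF disj, of a0]) (use a0 in auto)
    then show "?F x = \<mu> x * hitprob P B A x" using x by (simp add: eq_pot_def)
  qed
  also have "(\<Sum>\<^sub>\<infinity>x\<in>B. ?F x) = - (\<Sum>\<^sub>\<infinity>x\<in>B. \<mu> x * hitprob P A B x)"
    unfolding infsum_uminus[symmetric]
    by (rule infsum_cong) (use disj hitprob_eq_trans_op[OF disj] in \<open>auto simp: eq_pot_def\<close>)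
  finally show ?thesis using z by simp
qed

lemma eq_pot_le_scaled:
  assumes XY: "X \<inter> Y = {}" and CE: "C \<inter> E = {}" and sub: "C \<union> E \<subseteq> X \<union> Y"
    and pt: "pt \<in> X \<union> Y" and d: "0 \<le> d"
    and on_X: "\<And>x. x \<in> X \<Longrightarrow> c \<le> d * eq_pot P C E x"
  shows "c * eq_pot P X Y x \<le> d * eq_pot P C E x"
proof (rule harmonic_le[where D="- (X \<union> Y)" and u="\<lambda>x. c * eq_pot P X Y x"
      and v="\<lambda>x. d * eq_pot P C E x"])
  show "bounded_fun (\<lambda>x. c * eq_pot P X Y x)" "bounded_fun (\<lambda>x. d * eq_pot P C E x)"
    by (intro bounded_fun_cmult bounded_fun_eq_pot)+
  show "c * eq_pot P X Y x = trans_op P (\<lambda>x. c * eq_pot P X Y x) x \<and>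
        d * eq_pot P C E x = trans_op P (\<lambda>x. d * eq_pot P C E x) x" if "x \<in> - (X \<union> Y)" for x
    using that sub eq_pot_harmonic[OF XY, of x] eq_pot_harmonic[OF CE, of x]
    by (auto simp: trans_op_cmult)
  show "c * eq_pot P X Y x \<le> d * eq_pot P C E x" if "x \<notin> - (X \<union> Y)" for x
  proof (cases "x \<in> X")
    case True then show ?thesis using on_X by (simp add: eq_pot_def)
  next
    case False
    then show ?thesis using that d eq_pot_bounds[of C E x] by (simp add: eq_pot_def)
  qed
  show "pt \<notin> - (X \<union> Y)" using pt by simp
qed

lemma hitprob_le_scaled:
  assumes XY: "X \<inter> Y = {}" and CE: "C \<inter> E = {}" and "C \<union> E \<subseteq> X \<union> Y"
    and "pt \<in> X \<union> Y" and "0 \<le> d"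
    and "\<And>x. x \<in> X \<Longrightarrow> c \<le> d * eq_pot P C E x"
  shows "c * hitprob P X Y x \<le> d * hitprob P C E x"
proof -
  have "c * hitprob P X Y x = trans_op P (\<lambda>y. c * eq_pot P X Y y) x"
    by (simp add: hitprob_eq_trans_op[OF XY] trans_op_cmult)
  also have "\<dots> \<le> trans_op P (\<lambda>y. d * eq_pot P C E y) x"
    by (intro trans_op_mono bounded_fun_cmult bounded_fun_eq_pot eq_pot_le_scaled[OF assms])
  also have "\<dots> = d * hitprob P C E x"
    by (simp add: hitprob_eq_trans_op[OF CE] trans_op_cmult)
  finally show ?thesis .
qed

lemma cap_mono:
  assumes "A \<subseteq> A'" "B \<subseteq> B'" "A' \<inter> B' = {}" "a \<in> A"
  shows "cap P \<mu> A B \<le> cap P \<mu> A' B'"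
proof -
  let ?h = "eq_pot P A' B'"
  have "cap P \<mu> A B \<le> dirichlet_form P \<mu> ?h ?h"
    by (rule cap_le_dirichlet_form) (use assms in \<open>auto simp: eq_pot_def bounded_fun_eq_pot\<close>)
  also have "\<dots> = cap P \<mu> A' B'"
    by (rule dirichlet_form_eq_pot) (use assms in \<open>auto simp: eq_pot_def bounded_fun_eq_pot\<close>)
  finally show ?thesis .
qed

text \<open>The test function is the equilibrium potential of \<open>A, B\<close> stretched affinely so that it
  reaches \<open>1\<close> at level \<open>1 - \<delta>\<close> and \<open>0\<close> at level \<open>\<delta>\<close>, then clamped to \<open>[0, 1]\<close>; being a
  \<open>1 / (1 - 2\<delta>)\<close>-Lipschitz function of \<open>h(A, B)\<close>, its energy is at most \<open>1 / (1 - 2\<delta>)\<close>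
  times that of \<open>h(A, B)\<close>.\<close>
lemma cap_level_sets_le:
  assumes AB: "A \<inter> B = {}" and a: "a \<in> A" and UA: "A \<subseteq> UA" and UB: "B \<subseteq> UB"
    and delta: "0 < \<delta>" "\<delta> < 1/2"
    and hUA: "\<And>x. x \<in> UA \<Longrightarrow> 1 - \<delta> \<le> eq_pot P A B x"
    and hUB: "\<And>x. x \<in> UB \<Longrightarrow> eq_pot P A B x \<le> \<delta>"
  shows "(1 - 2 * \<delta>) * cap P \<mu> UA UB \<le> cap P \<mu> A B"
proof -
  let ?h = "eq_pot P A B"
  define L where "L = 1 / (1 - 2 * \<delta>)"
  have Lpos: "0 < L" and L1: "(1 - 2 * \<delta>) * L = 1" unfolding L_def using delta by simp_all
  define f where "f x = clamp01 ((?h x - \<delta>) * L)" for x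
  have fb: "bounded_fun f" unfolding f_def by (rule bounded_fun_unit_interval) (simp add: clamp01_def)
  have f1: "f x = 1" if "x \<in> UA" for x
  proof -
    have "(1 - 2 * \<delta>) * L \<le> (?h x - \<delta>) * L" using hUA[OF that] Lpos by (intro mult_right_mono) auto
    then show ?thesis using L1 unfolding f_def clamp01_def by simp
  qed
  have f0: "f x = 0" if "x \<in> UB" for x
  proof -
    have "(?h x - \<delta>) * L \<le> 0" using hUB[OF that] Lpos by (simp add: mult_nonpos_nonneg)
    then show ?thesis unfolding f_def clamp01_def by simp
  qed
  have UAUB: "UA \<inter> UB = {}" using hUA hUB delta by force
  have "cap P \<mu> UA UB \<le> dirichlet_form P \<mu> f f"
    by (rule cap_le_dirichlet_form[OF UAUB _ fb f1 f0]) (use a UA in auto)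
  also have "\<dots> \<le> L * dirichlet_form P \<mu> f ?h"
  proof (rule dirichlet_form_le_scaled[OF fb bounded_fun_eq_pot])
    show "(f x - f y) * (f x - f y) \<le> L * ((f x - f y) * (?h x - ?h y))" for x y
      unfolding f_def L_def by (rule clamp01_diff_sq_le[OF delta])
  qed
  also have "dirichlet_form P \<mu> f ?h = cap P \<mu> A B"
    by (rule dirichlet_form_eq_pot[OF AB a fb]) (use f1 f0 UA UB in auto)
  finally have "cap P \<mu> UA UB \<le> L * cap P \<mu> A B" .
  then have "(1 - 2 * \<delta>) * cap P \<mu> UA UB \<le> (1 - 2 * \<delta>) * L * cap P \<mu> A B"
    using delta by (simp add: mult.assoc)
  then show ?thesis using L1 by simp
qed

text \<open>Each state of \<open>A \<union> R\<close> contributes to \<open>cap(X, A \<union> R)\<close> the probability of reaching \<open>X\<close>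
  first; on \<open>A\<close> this is at most \<open>1/\<delta>\<close> times the probability of reaching \<open>R\<close> first, on \<open>R\<close> at
  most \<open>c\<close> times the probability of reaching \<open>A\<close> first, and both sums are \<open>cap(A, R)\<close>.\<close>
lemma cap_le_escape:
  assumes AR: "A \<inter> R = {}" and X: "X \<inter> (A \<union> R) = {}" and x: "x \<in> X" and a: "a \<in> A"
    and delta: "0 < \<delta>" and c: "0 \<le> c"
    and to_R: "\<And>x. x \<in> X \<Longrightarrow> \<delta> \<le> eq_pot P R A x"
    and to_A: "\<And>x. x \<in> X \<Longrightarrow> 1 \<le> c * eq_pot P A R x"
  shows "cap P \<mu> X (A \<union> R) \<le> (1 / \<delta> + c) * cap P \<mu> A R"
proof -
  let ?e = "\<lambda>m. \<mu> m * hitprob P X (A \<union> R) m"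
  have s: "?e summable_on S" for S by (rule summable_on_mu_mult[OF bounded_fun_hitprob])
  have on_A: "\<delta> * hitprob P X (A \<union> R) m \<le> 1 * hitprob P R A m" for m
    by (rule hitprob_le_scaled[where pt=a]) (use AR X a to_R in auto)
  have on_R: "1 * hitprob P X (A \<union> R) m \<le> c * hitprob P A R m" for m
    by (rule hitprob_le_scaled[where pt=a]) (use AR X a to_A c in auto)
  have "cap P \<mu> X (A \<union> R) = (\<Sum>\<^sub>\<infinity>m\<in>A. ?e m) + (\<Sum>\<^sub>\<infinity>m\<in>R. ?e m)"
    unfolding cap_eq_infsum_target[OF X x] by (rule infsum_Un_disjoint[OF s s AR])
  also have "(\<Sum>\<^sub>\<infinity>m\<in>A. ?e m) \<le> (\<Sum>\<^sub>\<infinity>m\<in>A. 1 / \<delta> * (\<mu> m * hitprob P R A m))"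
  proof (rule infsum_mono[OF s])
    show "(\<lambda>m. 1 / \<delta> * (\<mu> m * hitprob P R A m)) summable_on A"
      by (intro summable_on_cmult_right summable_on_mu_mult bounded_fun_hitprob)
    show "?e m \<le> 1 / \<delta> * (\<mu> m * hitprob P R A m)" for m
      using mult_left_mono[OF on_A[of m] mu_nonneg[of m]] delta by (simp add: field_simps)
  qed
  also have "\<dots> = 1 / \<delta> * cap P \<mu> A R" unfolding cap_def by (rule infsum_cmult_right')
  also have "(\<Sum>\<^sub>\<infinity>m\<in>R. ?e m) \<le> (\<Sum>\<^sub>\<infinity>m\<in>R. c * (\<mu> m * hitprob P A R m))"
  proof (rule infsum_mono[OF s])
    show "(\<lambda>m. c * (\<mu> m * hitprob P A R m)) summable_on R"
      by (intro summable_on_cmult_right summable_on_mu_mult bounded_fun_hitprob)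
    show "?e m \<le> c * (\<mu> m * hitprob P A R m)" for m
      using mult_left_mono[OF on_R[of m] mu_nonneg[of m]] by (simp add: field_simps)
  qed
  also have "\<dots> = c * cap P \<mu> A R" unfolding cap_eq_infsum_target[OF AR a] by (rule infsum_cmult_right')
  finally show ?thesis by (simp add: algebra_simps)
qed

end

section \<open>Metastable sets and harmonic neighbourhoods\<close>

lemma le_div_of_mult_le_inverse_plus:
  fixes K x m \<rho> \<delta> :: real
  assumes "2 \<le> K" "0 < \<delta>" "\<delta> < 1/2" "0 \<le> \<rho>" "0 \<le> m"
    and "K * x \<le> \<rho> * (1 / \<delta> + K) * m"
  shows "x \<le> \<rho> / \<delta> * m"
proof -
  have "1 + K * \<delta> \<le> K" using assms(1-3) mult_left_mono[of \<delta> "1/2" K] by linarith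
  then have "(1 + K * \<delta>) / \<delta> \<le> K / \<delta>" using assms(2) by (intro divide_right_mono) auto
  then have "1 / \<delta> + K \<le> K * (1 / \<delta>)" using assms(2) by (simp add: add_divide_distrib)
  then have "(1 / \<delta> + K) * (\<rho> * m) \<le> K * (1 / \<delta>) * (\<rho> * m)"
    using assms(4,5) by (intro mult_right_mono) auto
  then have "\<rho> * (1 / \<delta> + K) * m \<le> K * (\<rho> / \<delta> * m)" by (simp add: algebra_simps)
  then have "K * x \<le> K * (\<rho> / \<delta> * m)" using assms(6) by linarith
  then show ?thesis by (rule mult_left_le_imp_le) (use assms(1) in simp)
qed

locale metastable_family = reversible_chain +
  fixes M S :: "nat \<Rightarrow> 's set" and K :: nat
  assumes M_nonempty: "j < K \<Longrightarrow> M j \<noteq> {}"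
    and M_disjoint: "j < K \<Longrightarrow> k < K \<Longrightarrow> j \<noteq> k \<Longrightarrow> M j \<inter> M k = {}"
    and partition: "metastable_partition P M K S"
begin

lemma S_disjoint: "j < K \<Longrightarrow> k < K \<Longrightarrow> j \<noteq> k \<Longrightarrow> S j \<inter> S k = {}"
  and S_subset_local_valley: "j < K \<Longrightarrow> S j \<subseteq> local_valley P M K j"
  and M_subset_S: "j < K \<Longrightarrow> M j \<subseteq> S j"
  using partition unfolding metastable_partition_def by blast+

lemma sum_eq_pot_on_Mbig:
  assumes "x \<in> Mbig M K"
  shows "(\<Sum>j<K. eq_pot P (M j) (Mbig M K - M j) x) = 1"
proof -
  obtain k where k: "k < K" "x \<in> M k" using assms unfolding Mbig_def by blast
  have "(\<Sum>j<K. eq_pot P (M j) (Mbig M K - M j) x) = (\<Sum>j<K. if j = k then 1 else 0)"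
  proof (rule sum.cong)
    fix j assume "j \<in> {..<K}"
    then have "j \<noteq> k \<Longrightarrow> x \<notin> M j" using M_disjoint[of j k] k by auto
    then show "eq_pot P (M j) (Mbig M K - M j) x = (if j = k then 1 else 0)"
      using assms k by (simp add: eq_pot_def)
  qed simp
  also have "\<dots> = 1" using k by simp
  finally show ?thesis .
qed

text \<open>The sum is harmonic off the metastable sets and equals \<open>1\<close> on them.\<close>
lemma sum_eq_pot_eq_1:
  assumes K: "0 < K"
  shows "(\<Sum>j<K. eq_pot P (M j) (Mbig M K - M j) x) = 1"
proof -
  let ?Mb = "Mbig M K"
  let ?E = "\<lambda>x. \<Sum>j<K. eq_pot P (M j) (?Mb - M j) x"
  have Eb: "bounded_fun ?E"
  proof (rule bounded_funI[of _ "real K"])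
    fix x
    have "\<bar>?E x\<bar> \<le> (\<Sum>j<K. \<bar>eq_pot P (M j) (?Mb - M j) x\<bar>)" by (rule sum_abs)
    also have "\<dots> \<le> (\<Sum>j<K. 1)" by (rule sum_mono) (use eq_pot_bounds in auto)
    finally show "\<bar>?E x\<bar> \<le> real K" by simp
  qed
  obtain m where m: "m \<in> M 0" using M_nonempty[OF K] by blast
  have m': "m \<notin> - ?Mb" using m K unfolding Mbig_def by auto
  have harm: "?E x = trans_op P ?E x \<and> 1 = trans_op P (\<lambda>_. 1) x" if "x \<in> - ?Mb" for x
  proof
    have "?E x = (\<Sum>j<K. trans_op P (eq_pot P (M j) (?Mb - M j)) x)"
      by (intro sum.cong eq_pot_harmonic) (use that in \<open>auto simp: Mbig_def\<close>)
    also have "\<dots> = trans_op P ?E x" by (rule trans_op_sum[symmetric]) (auto simp: bounded_fun_eq_pot)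
    finally show "?E x = trans_op P ?E x" .
    show "1 = trans_op P (\<lambda>_. 1) x" by (simp add: trans_op_const)
  qed
  have "?E x \<le> 1" by (rule harmonic_le[OF Eb bounded_fun_const harm _ m']) (use sum_eq_pot_on_Mbig in auto)
  moreover have "1 \<le> ?E x"
    by (rule harmonic_le[OF bounded_fun_const Eb _ _ m']) (use sum_eq_pot_on_Mbig harm in auto)
  ultimately show ?thesis by simp
qed

lemma local_valley_eq_pot_ge:
  assumes i: "i < K" and x: "x \<in> S i" "x \<notin> Mbig M K"
  shows "1 \<le> real K * eq_pot P (M i) (Mbig M K - M i) x"
proof -
  let ?Mb = "Mbig M K"
  have ep: "eq_pot P (M j) (?Mb - M j) x = hitprob P (M j) (?Mb - M j) x" if "j < K" for j
    using x that unfolding eq_pot_def Mbig_def by auto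
  have "1 = (\<Sum>j<K. eq_pot P (M j) (?Mb - M j) x)"
    by (rule sum_eq_pot_eq_1[symmetric]) (use i in simp)
  also have "\<dots> \<le> (\<Sum>j<K. eq_pot P (M i) (?Mb - M i) x)"
  proof (rule sum_mono)
    fix j assume "j \<in> {..<K}"
    then show "eq_pot P (M j) (?Mb - M j) x \<le> eq_pot P (M i) (?Mb - M i) x"
      using ep i S_subset_local_valley[OF i] x unfolding local_valley_def by auto
  qed
  finally show ?thesis by simp
qed

lemma M_subset_harm_nbhd:
  assumes "IA \<subseteq> {..<K}" "0 \<le> \<delta>"
  shows "(\<Union>j\<in>IA. M j) \<subseteq> harm_nbhd P M S IA \<delta> IB"
  using assms M_subset_S unfolding harm_nbhd_def eq_pot_def by fastforce

lemma cap_harm_nbhd_bounds: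
  assumes i: "i < K" and IB: "IB \<subseteq> {..<K} - {i}" "IB \<noteq> {}" and delta: "0 < \<delta>" "\<delta> < 1/2"
  defines "UA \<equiv> harm_nbhd P M S {i} \<delta> IB" and "UB \<equiv> harm_nbhd P M S IB \<delta> {i}"
  shows "(1 - 2 * \<delta>) * cap P \<mu> UA UB \<le> cap P \<mu> (M i) (\<Union>j\<in>IB. M j)"
    and "cap P \<mu> (M i) (\<Union>j\<in>IB. M j) \<le> cap P \<mu> UA UB"
    and "0 < cap P \<mu> UA UB"
proof -
  define B where "B = (\<Union>j\<in>IB. M j)"
  obtain a where a: "a \<in> M i" using M_nonempty[OF i] by blast
  obtain j b where b: "j \<in> IB" "b \<in> M j" using IB M_nonempty by blast
  have bB: "b \<in> B" using b unfolding B_def by blast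
  have AB: "M i \<inter> B = {}" unfolding B_def using M_disjoint[OF i] IB by blast
  have AUA: "M i \<subseteq> UA" using M_subset_harm_nbhd[of "{i}" \<delta> IB] i delta unfolding UA_def by simp
  have BUB: "B \<subseteq> UB" using M_subset_harm_nbhd[of IB \<delta> "{i}"] IB delta unfolding UB_def B_def by auto
  have hUA: "1 - \<delta> \<le> eq_pot P (M i) B x" if "x \<in> UA" for x
    using that unfolding UA_def harm_nbhd_def B_def by simp
  have hUB: "eq_pot P (M i) B x \<le> \<delta>" if "x \<in> UB" for x
    using that eq_pot_swap[OF AB, of a x] a unfolding UB_def harm_nbhd_def B_def by simp
  have UAUB: "UA \<inter> UB = {}" using hUA hUB delta by force
  show "(1 - 2 * \<delta>) * cap P \<mu> UA UB \<le> cap P \<mu> (M i) B"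
    by (rule cap_level_sets_le[OF AB a AUA BUB delta hUA hUB])
  show "cap P \<mu> (M i) B \<le> cap P \<mu> UA UB" by (rule cap_mono[OF AUA BUB UAUB a])
  show "0 < cap P \<mu> UA UB" by (rule cap_pos[OF UAUB]) (use a AUA bB BUB in auto)
qed

text \<open>Metastability bounds the mass of a set \<open>X\<close> off the metastable sets by the rate at which
  it is left: \<open>K p\<^sub>e\<^sub>s\<^sub>c \<mu>[X] \<le> \<rho> cap(X, M)\<close>, while \<open>cap(M\<^sub>i, M - M\<^sub>i) \<le> p\<^sub>e\<^sub>s\<^sub>c \<mu>[M\<^sub>i]\<close>.\<close>
lemma meas_le_of_metastable:
  assumes meta: "metastable P \<mu> \<rho> M K" and rho: "0 \<le> \<rho>" and i: "i < K"
    and X: "X \<noteq> {}" "X \<subseteq> - Mbig M K" and C: "0 \<le> C"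
    and pos: "0 < cap P \<mu> (M i) (Mbig M K - M i)"
    and le: "cap P \<mu> X (Mbig M K) \<le> C * cap P \<mu> (M i) (Mbig M K - M i)"
  shows "real K * meas \<mu> X \<le> \<rho> * C * meas \<mu> (M i)"
proof -
  let ?c = "cap P \<mu> (M i) (Mbig M K - M i)" and ?p = "p_esc P \<mu> M K"
  have mpos: "0 < meas \<mu> (M i)" using meas_pos M_nonempty[OF i] by blast
  have mXpos: "0 < meas \<mu> X" using meas_pos X(1) by blast
  have "?c / meas \<mu> (M i) \<le> ?p"
    unfolding p_esc_def hitprob_cond_def cap_def[symmetric] by (rule Max_ge) (use i in auto)
  then have c_le: "?c \<le> ?p * meas \<mu> (M i)" using mpos by (simp add: pos_divide_le_eq)
  have "0 < ?p * meas \<mu> (M i)" using c_le pos by linarith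
  then have ppos: "0 < ?p" using mpos by (simp add: zero_less_mult_iff)
  have "real K * ?p \<le> \<rho> * hitprob_cond P \<mu> X (Mbig M K) X"
    using meta X unfolding metastable_def by blast
  also have "hitprob_cond P \<mu> X (Mbig M K) X = cap P \<mu> X (Mbig M K) / meas \<mu> X"
    unfolding hitprob_cond_def cap_def ..
  finally have "meas \<mu> X * (real K * ?p) \<le> \<rho> * cap P \<mu> X (Mbig M K)"
    using mXpos by (simp add: pos_le_divide_eq mult.commute mult.left_commute)
  also have "\<dots> \<le> \<rho> * (C * (?p * meas \<mu> (M i)))"
    using le mult_left_mono[OF c_le C] rho by (intro mult_left_mono) auto
  finally have "?p * (real K * meas \<mu> X) \<le> ?p * (\<rho> * C * meas \<mu> (M i))"
    by (simp add: algebra_simps)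
  then show ?thesis using ppos by simp
qed

lemma S_diff_harm_nbhd_disjoint_Mbig:
  assumes i: "i < K" and delta: "0 \<le> \<delta>"
  shows "(S i - harm_nbhd P M S {i} \<delta> IB) \<inter> Mbig M K = {}"
proof -
  have "x \<notin> M k" if "x \<in> S i - harm_nbhd P M S {i} \<delta> IB" "k < K" for x k
  proof (cases "k = i")
    case True
    then show ?thesis using that M_subset_harm_nbhd[of "{i}" \<delta> IB] i delta by auto
  next
    case False
    then show ?thesis using that M_subset_S[of k] S_disjoint[OF i, of k] by blast
  qed
  then show ?thesis unfolding Mbig_def by blast
qed

lemma cap_outside_harm_nbhd_le:
  assumes i: "i < K" and IB: "IB \<subseteq> {..<K} - {i}" and delta: "0 < \<delta>"
    and x: "x \<in> S i - harm_nbhd P M S {i} \<delta> IB"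
  shows "cap P \<mu> (S i - harm_nbhd P M S {i} \<delta> IB) (Mbig M K)
    \<le> (1 / \<delta> + real K) * cap P \<mu> (M i) (Mbig M K - M i)"
proof -
  define X where "X = S i - harm_nbhd P M S {i} \<delta> IB"
  define B where "B = (\<Union>j\<in>IB. M j)"
  define R where "R = Mbig M K - M i"
  obtain a where a: "a \<in> M i" using M_nonempty[OF i] by blast
  have X_eq: "X = {x \<in> S i. eq_pot P (M i) B x < 1 - \<delta>}"
    unfolding X_def harm_nbhd_def B_def by auto
  have AR: "M i \<inter> R = {}" unfolding R_def by blast
  have Mbig_eq: "Mbig M K = M i \<union> R" unfolding R_def Mbig_def using i by blast
  have BR: "B \<subseteq> R" unfolding R_def B_def Mbig_def using IB M_disjoint[OF i] by blast
  have X_Mbig: "X \<inter> Mbig M K = {}"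
    unfolding X_def using S_diff_harm_nbhd_disjoint_Mbig[OF i] delta by simp
  have to_R: "\<delta> \<le> eq_pot P R (M i) y" if "y \<in> X" for y
  proof -
    have "1 * eq_pot P (M i) R y \<le> 1 * eq_pot P (M i) B y"
      by (rule eq_pot_le_scaled[where pt=a]) (use AR BR a in \<open>auto simp: eq_pot_def\<close>)
    then show ?thesis using that eq_pot_swap[OF AR, of a y] a unfolding X_eq by auto
  qed
  have to_A: "1 \<le> real K * eq_pot P (M i) R y" if "y \<in> X" for y
    using local_valley_eq_pot_ge[OF i] that X_Mbig unfolding X_eq R_def by blast
  have "cap P \<mu> X (Mbig M K) \<le> (1 / \<delta> + real K) * cap P \<mu> (M i) R"
    unfolding Mbig_eq by (rule cap_le_escape[OF AR _ _ a delta _ to_R to_A]) (use X_Mbig Mbig_eq x X_def in auto)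
  then show ?thesis unfolding X_def R_def .
qed

lemma meas_outside_harm_nbhd_le:
  assumes meta: "metastable P \<mu> \<rho> M K" and rho: "0 < \<rho>" and K: "2 \<le> K" and i: "i < K"
    and IB: "IB \<subseteq> {..<K} - {i}" "IB \<noteq> {}" and delta: "0 < \<delta>" "\<delta> < 1/2"
  shows "meas \<mu> (S i - harm_nbhd P M S {i} \<delta> IB) \<le> \<rho> / \<delta> * meas \<mu> (M i)"
proof (cases "S i - harm_nbhd P M S {i} \<delta> IB = {}")
  case True
  have "0 \<le> meas \<mu> (M i)" unfolding meas_def by (rule infsum_nonneg) (simp add: mu_nonneg)
  moreover have "meas \<mu> (S i - harm_nbhd P M S {i} \<delta> IB) = 0" unfolding True meas_def by simp
  ultimately show ?thesis using rho delta by simp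
next
  case False
  let ?X = "S i - harm_nbhd P M S {i} \<delta> IB"
  obtain x where x: "x \<in> ?X" using False by blast
  obtain a where a: "a \<in> M i" using M_nonempty[OF i] by blast
  obtain j b where b: "j \<in> IB" "b \<in> M j" using IB M_nonempty by blast
  have pos: "0 < cap P \<mu> (M i) (Mbig M K - M i)"
    by (rule cap_pos[OF _ a, of _ b]) (use b IB i M_disjoint[OF i, of j] in \<open>auto simp: Mbig_def\<close>)
  have "real K * meas \<mu> ?X \<le> \<rho> * (1 / \<delta> + real K) * meas \<mu> (M i)"
    by (rule meas_le_of_metastable[OF meta _ i False _ _ pos cap_outside_harm_nbhd_le[OF i IB(1) delta(1) x]])
      (use S_diff_harm_nbhd_disjoint_Mbig[OF i, of \<delta> IB] rho delta in auto)
  moreover have "0 \<le> meas \<mu> (M i)" using meas_pos[OF a] by simp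
  ultimately show ?thesis using K rho delta by (intro le_div_of_mult_le_inverse_plus) auto
qed

end

theorem mainTheorem14:
  fixes P :: "'s::countable \<Rightarrow> 's \<Rightarrow> real" and \<mu> :: "'s \<Rightarrow> real"
    and \<rho> :: real and M S :: "nat \<Rightarrow> 's set" and K i :: nat and IB :: "nat set"
    and \<delta> :: real
  assumes chain: "rev_pos_rec_chain P \<mu>"
    and rho: "0 < \<rho>"
    and K: "2 \<le> K"
    and meta: "metastable P \<mu> \<rho> M K"
    and part: "metastable_partition P M K S"
    and i: "i < K"
    and IB: "IB \<subseteq> {..<K} - {i}" "IB \<noteq> {}"
    and delta: "0 < \<delta>" "\<delta> < 1/2"
  shows "1 - 2 * \<delta> \<le> cap P \<mu> (M i) (\<Union>j\<in>IB. M j)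
            / cap P \<mu> (harm_nbhd P M S {i} \<delta> IB) (harm_nbhd P M S IB \<delta> {i})
       \<and> cap P \<mu> (M i) (\<Union>j\<in>IB. M j)
            / cap P \<mu> (harm_nbhd P M S {i} \<delta> IB) (harm_nbhd P M S IB \<delta> {i}) \<le> 1
       \<and> meas \<mu> (S i - harm_nbhd P M S {i} \<delta> IB) \<le> \<rho> / \<delta> * meas \<mu> (M i)"
proof -
  interpret metastable_family P \<mu> M S K
    using chain meta part
    by unfold_locales (auto simp: rev_pos_rec_chain_def metastable_def)
  let ?c = "cap P \<mu> (M i) (\<Union>j\<in>IB. M j)"
    and ?cU = "cap P \<mu> (harm_nbhd P M S {i} \<delta> IB) (harm_nbhd P M S IB \<delta> {i})"
  note bounds = cap_harm_nbhd_bounds[OF i IB delta]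
  have "1 - 2 * \<delta> \<le> ?c / ?cU" using bounds(1,3) by (simp add: pos_le_divide_eq)
  moreover have "?c / ?cU \<le> 1" using bounds(2,3) by simp
  moreover have "meas \<mu> (S i - harm_nbhd P M S {i} \<delta> IB) \<le> \<rho> / \<delta> * meas \<mu> (M i)"
    by (rule meas_outside_harm_nbhd_le[OF meta rho K i IB delta])
  ultimately show ?thesis by blast
qed

end
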